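(* Let $(H,\alpha_H)$ be a Hom-bialgebra. The category $\mathcal L^H_H$ of Hom-Long dimodules is a monoidal category with: for objects $U,V$, the object $(U\otimes V,\alpha_U\otimes\alpha_V)$ with action $(u\otimes v)\cdot h=u\cdot\alpha_H^{-i-2}(h_1)\otimes v\cdot\alpha_H^{-j-2}(h_2)$ and coaction $u\otimes v\mapsto u_{(0)}\otimes v_{(0)}\otimes\alpha_H^i(u_{(1)})\alpha_H^j(v_{(1)})$; tensor product of morphisms the tensor product of linear maps; unit $(\Bbbk,\mathrm{id})$; associativity and unit constraints those of $\overline{\mathcal H}^{i,j}(Vec_\Bbbk)$.
   Context: $\Bbbk$ field of characteristic $0$; vector spaces finite-dimensional; structure maps $\alpha$ bijective; $i,j$ fixed integers. $\overline{\mathcal H}^{i,j}(Vec_\Bbbk)$: objects $(X,\alpha_X)$ with $\alpha_X$ a linear automorphism; $a_{X,Y,Z}((x\otimes y)\otimes z)=\alpha_X^{i+1}(x)\otimes(y\otimes\alpha_Z^{-j-1}(z))$, $l_X(\lambda\otimes x)=\lambda\alpha_X^{j+1}(x)$, $r_X(x\otimes\lambda)=\lambda\alpha_X^{i+1}(x)$. Hom-bialgebra: Hom-algebra ($\alpha(a)(bc)=(ab)\alpha(c)$, $\alpha(1)=1$, $1a=a1=\alpha(a)$), Hom-coalgebra ($\varepsilon\alpha=\varepsilon$, $\alpha(c_1)\otimes\Delta(c_2)=\Delta(c_1)\otimes\alpha(c_2)$, $\varepsilon(c_1)c_2=c_1\varepsilon(c_2)=\alpha(c)$), $\Delta,\varepsilon$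 unit-preserving Hom-algebra maps. A Hom-Long dimodule is $(U,\alpha_U)$, a right $H$-Hom-module ($(u\cdot a)\cdot\alpha_H(b)=\alpha_U(u)\cdot(ab)$, $u\cdot1_H=\alpha_U(u)$) and right $H$-Hom-comodule ($\rho(u)=u_{(0)}\otimes u_{(1)}$, $\alpha_U(u_{(0)})\otimes\Delta(u_{(1)})=\rho(u_{(0)})\otimes\alpha_H(u_{(1)})$, $\varepsilon(u_{(1)})u_{(0)}=\alpha_U(u)$), structure maps commuting with the $\alpha$'s, such that $\rho(u\cdot h)=u_{(0)}\cdot\alpha_H(h)\otimes\alpha_H(u_{(1)})$; morphisms are $H$-linear, $H$-colinear maps commuting with the $\alpha$'s. *)

theory Defs
  imports Main
begin

text \<open>Coordinate model: a finite-dimensional k-vector space is 'a => 'k with 'a a finite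
 type; the tensor product of 'a => 'k and 'b => 'k is ('a * 'b) => 'k.\<close>

definition lin :: "(('a \<Rightarrow> 'k::field) \<Rightarrow> ('b \<Rightarrow> 'k)) \<Rightarrow> bool" where
  "lin f \<longleftrightarrow> (\<forall>x y. f (\<lambda>a. x a + y a) = (\<lambda>b. f x b + f y b))
              \<and> (\<forall>c x. f (\<lambda>a. c * x a) = (\<lambda>b. c * f x b))"

definition linf :: "(('a \<Rightarrow> 'k::field) \<Rightarrow> 'k) \<Rightarrow> bool" where
  "linf e \<longleftrightarrow> (\<forall>x y. e (\<lambda>a. x a + y a) = e x + e y) \<and> (\<forall>c x. e (\<lambda>a. c * x a) = c * e x)"

definition tens :: "('a \<Rightarrow> 'k::times) \<Rightarrow> ('b \<Rightarrow> 'k) \<Rightarrow> ('a \<times> 'b \<Rightarrow> 'k)" where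
  "tens x y = (\<lambda>(a, b). x a * y b)"

definition tmap :: "(('a \<Rightarrow> 'k) \<Rightarrow> ('b \<Rightarrow> 'k)) \<Rightarrow> (('c \<Rightarrow> 'k) \<Rightarrow> ('d \<Rightarrow> 'k))
                      \<Rightarrow> ('a \<times> 'c \<Rightarrow> 'k) \<Rightarrow> ('b \<times> 'd \<Rightarrow> 'k)" where
  "tmap f g w = (\<lambda>(b, d). f (\<lambda>a. g (\<lambda>c. w (a, c)) d) b)"

definition reassoc :: "(('a \<times> 'b) \<times> 'c \<Rightarrow> 'k) \<Rightarrow> ('a \<times> ('b \<times> 'c) \<Rightarrow> 'k)" where
  "reassoc w = (\<lambda>(a, b, c). w ((a, b), c))"

definition mid :: "(('a \<times> 'b) \<times> ('c \<times> 'd) \<Rightarrow> 'k) \<Rightarrow> (('a \<times> 'c) \<times> ('b \<times> 'd) \<Rightarrow> 'k)" where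
  "mid w = (\<lambda>((a, c), (b, d)). w ((a, b), (c, d)))"

definition zpow :: "('a \<Rightarrow> 'a) \<Rightarrow> int \<Rightarrow> 'a \<Rightarrow> 'a" where
  "zpow f n = (if 0 \<le> n then f ^^ nat n else inv f ^^ nat (- n))"

record ('k, 'h) hbialg =
  hm :: "('h \<times> 'h \<Rightarrow> 'k) \<Rightarrow> ('h \<Rightarrow> 'k)"
  hone :: "'h \<Rightarrow> 'k"
  hcom :: "('h \<Rightarrow> 'k) \<Rightarrow> ('h \<times> 'h \<Rightarrow> 'k)"
  hcou :: "('h \<Rightarrow> 'k) \<Rightarrow> 'k"
  halpha :: "('h \<Rightarrow> 'k) \<Rightarrow> ('h \<Rightarrow> 'k)"

definition hom_bialgebra :: "('k::field, 'h) hbialg \<Rightarrow> bool" where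
  "hom_bialgebra H \<longleftrightarrow>
    (let m = hm H; one = hone H; \<Delta> = hcom H; \<epsilon> = hcou H; \<alpha> = halpha H in
     lin m \<and> lin \<Delta> \<and> linf \<epsilon> \<and> lin \<alpha> \<and> bij \<alpha>
     \<comment> \<open>Hom-algebra\<close>
     \<and> (\<forall>a b c. m (tens (\<alpha> a) (m (tens b c))) = m (tens (m (tens a b)) (\<alpha> c)))
     \<and> \<alpha> one = one
     \<and> (\<forall>a. m (tens one a) = \<alpha> a \<and> m (tens a one) = \<alpha> a)
     \<and> (\<forall>a b. \<alpha> (m (tens a b)) = m (tens (\<alpha> a) (\<alpha> b)))
     \<comment> \<open>Hom-coalgebra\<close>
     \<and> (\<forall>c. \<epsilon> (\<alpha> c) = \<epsilon> c)
     \<and> (\<forall>c. tmap \<alpha> \<Delta> (\<Delta> c) = reassoc (tmap \<Delta> \<alpha> (\<Delta> c)))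
     \<and> (\<forall>c. (\<lambda>b. \<epsilon> (\<lambda>a. \<Delta> c (a, b))) = \<alpha> c \<and> (\<lambda>a. \<epsilon> (\<lambda>b. \<Delta> c (a, b))) = \<alpha> c)
     \<and> (\<forall>c. \<Delta> (\<alpha> c) = tmap \<alpha> \<alpha> (\<Delta> c))
     \<comment> \<open>Delta, epsilon unit-preserving Hom-algebra maps\<close>
     \<and> (\<forall>a b. \<Delta> (m (tens a b)) = tmap m m (mid (tens (\<Delta> a) (\<Delta> b))))
     \<and> \<Delta> one = tens one one
     \<and> (\<forall>a b. \<epsilon> (m (tens a b)) = \<epsilon> a * \<epsilon> b)
     \<and> \<epsilon> one = 1)"

record ('k, 'h, 'u) dimod =
  dal :: "('u \<Rightarrow> 'k) \<Rightarrow> ('u \<Rightarrow> 'k)"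
  dact :: "('u \<times> 'h \<Rightarrow> 'k) \<Rightarrow> ('u \<Rightarrow> 'k)"
  dco :: "('u \<Rightarrow> 'k) \<Rightarrow> ('u \<times> 'h \<Rightarrow> 'k)"

definition hom_long_dimod :: "('k::field, 'h) hbialg \<Rightarrow> ('k, 'h, 'u) dimod \<Rightarrow> bool" where
  "hom_long_dimod H U \<longleftrightarrow>
    (let aU = dal U; act = dact U; \<rho> = dco U; aH = halpha H in
     lin aU \<and> bij aU \<and> lin act \<and> lin \<rho>
     \<comment> \<open>right H-Hom-module\<close>
     \<and> (\<forall>u a b. act (tens (act (tens u a)) (aH b)) = act (tens (aU u) (hm H (tens a b))))
     \<and> (\<forall>u. act (tens u (hone H)) = aU u)
     \<comment> \<open>right H-Hom-comodule\<close>
     \<and> (\<forall>u. tmap aU (hcom H) (\<rho> u) = reassoc (tmap \<rho> aH (\<rho> u)))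
     \<and> (\<forall>u. (\<lambda>x. hcou H (\<lambda>h. \<rho> u (x, h))) = aU u)
     \<comment> \<open>structure maps commute with the alphas\<close>
     \<and> (\<forall>u h. aU (act (tens u h)) = act (tens (aU u) (aH h)))
     \<and> (\<forall>u. \<rho> (aU u) = tmap aU aH (\<rho> u))
     \<comment> \<open>Long compatibility\<close>
     \<and> (\<forall>u h. \<rho> (act (tens u h)) = tmap (\<lambda>x. act (tens x (aH h))) aH (\<rho> u)))"

definition ld_mor :: "('k::field, 'h) hbialg \<Rightarrow> ('k, 'h, 'u) dimod \<Rightarrow> ('k, 'h, 'v) dimod
                      \<Rightarrow> (('u \<Rightarrow> 'k) \<Rightarrow> ('v \<Rightarrow> 'k)) \<Rightarrow> bool" where
  "ld_mor H U V f \<longleftrightarrow> lin f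
     \<and> (\<forall>u. f (dal U u) = dal V (f u))
     \<and> (\<forall>u h. f (dact U (tens u h)) = dact V (tens (f u) h))
     \<and> (\<forall>u. dco V (f u) = tmap f id (dco U u))"

definition tensor_dimod :: "('k::field, 'h) hbialg \<Rightarrow> int \<Rightarrow> int \<Rightarrow> ('k, 'h, 'u) dimod
    \<Rightarrow> ('k, 'h, 'v) dimod \<Rightarrow> ('k, 'h, 'u \<times> 'v) dimod" where
  "tensor_dimod H i j U V =
    \<lparr> dal = tmap (dal U) (dal V),
      dact = (\<lambda>w. tmap (dact U) (dact V)
               (mid (tmap id (\<lambda>h. tmap (zpow (halpha H) (- i - 2)) (zpow (halpha H) (- j - 2))
                                        (hcom H h)) w))),
      dco = (\<lambda>w. tmap id (\<lambda>z. hm H (tmap (zpow (halpha H) i) (zpow (halpha H) j) z))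
               (mid (tmap (dco U) (dco V) w))) \<rparr>"

definition unit_dimod :: "('k::field, 'h) hbialg \<Rightarrow> ('k, 'h, unit) dimod" where
  "unit_dimod H = \<lparr> dal = id, dact = (\<lambda>w _. hcou H (\<lambda>h. w ((), h))), dco = (\<lambda>x. tens x (hone H)) \<rparr>"

text \<open>associativity and unit constraints of the category H^{i,j}(Vec_k)\<close>
definition amap :: "int \<Rightarrow> int \<Rightarrow> (('u \<Rightarrow> 'k) \<Rightarrow> ('u \<Rightarrow> 'k)) \<Rightarrow> (('w \<Rightarrow> 'k) \<Rightarrow> ('w \<Rightarrow> 'k))
                    \<Rightarrow> (('u \<times> 'v) \<times> 'w \<Rightarrow> 'k) \<Rightarrow> ('u \<times> ('v \<times> 'w) \<Rightarrow> 'k)" where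
  "amap i j aU aW z = reassoc (tmap (tmap (zpow aU (i + 1)) id) (zpow aW (- j - 1)) z)"

definition lmap :: "int \<Rightarrow> (('x \<Rightarrow> 'k) \<Rightarrow> ('x \<Rightarrow> 'k)) \<Rightarrow> (unit \<times> 'x \<Rightarrow> 'k) \<Rightarrow> ('x \<Rightarrow> 'k)" where
  "lmap j aX w = zpow aX (j + 1) (\<lambda>x. w ((), x))"

definition rmap :: "int \<Rightarrow> (('x \<Rightarrow> 'k) \<Rightarrow> ('x \<Rightarrow> 'k)) \<Rightarrow> ('x \<times> unit \<Rightarrow> 'k) \<Rightarrow> ('x \<Rightarrow> 'k)" where
  "rmap i aX w = zpow aX (i + 1) (\<lambda>x. w (x, ()))"

end

theory Submission
  imports Defs
begin

text \<open>
  Every space in sight is a coordinate space \<open>'a \<Rightarrow> 'k\<close> with \<open>'a\<close> finite, so two linear maps out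
  of a tensor product coincide once they agree on pure tensors. Each axiom of a Hom-Long dimodule
  for \<open>U \<otimes> V\<close>, the morphism properties of the constraints and the pentagon and triangle identities
  thereby become identities between pure tensors. These follow from the Hom-(co)associativity and
  (co)unit laws of \<open>H\<close>, the multiplicativity of \<open>\<Delta>\<close> and \<open>\<epsilon>\<close>, and the fact that all structure maps
  commute with the integer powers of the twisting maps: the powers of \<open>\<alpha>\<^sub>U\<close>, \<open>\<alpha>\<^sub>W\<close> in the
  constraints cancel exactly against the powers \<open>-i-2\<close>, \<open>-j-2\<close>, \<open>i\<close>, \<open>j\<close> of \<open>\<alpha>\<^sub>H\<close> built
  into the tensor product.
\<close>

section \<open>Coordinate linear algebra\<close>

definition delta :: "'a \<Rightarrow> 'a \<Rightarrow> 'k::field" where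
  "delta a = (\<lambda>x. if x = a then 1 else 0)"

lemma lin_add: "lin f \<Longrightarrow> f (\<lambda>a. x a + y a) = (\<lambda>b. f x b + f y b)"
  and lin_scale: "lin f \<Longrightarrow> f (\<lambda>a. c * x a) = (\<lambda>b. c * f x b)"
  by (simp_all add: lin_def)

lemma lin_zero: "lin f \<Longrightarrow> f (\<lambda>a. 0) = (\<lambda>b. 0)"
  using lin_scale[of f 0 "\<lambda>a. 0"] by simp

lemma lin_sum:
  assumes "lin f" "finite S"
  shows "f (\<lambda>z. \<Sum>s\<in>S. c s * v s z) = (\<lambda>y. \<Sum>s\<in>S. c s * f (v s) y)"
  using assms(2)
proof (induction S rule: finite_induct)
  case empty
  then show ?case using lin_zero[OF assms(1)] by simp
next
  case (insert x S)
  then show ?case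
    using lin_add[OF assms(1), of "\<lambda>z. c x * v x z" "\<lambda>z. \<Sum>s\<in>S. c s * v s z"]
      lin_scale[OF assms(1), of "c x" "v x"]
    by simp
qed

lemma delta_expansion: "(w::'a::finite \<Rightarrow> 'k::field) = (\<lambda>z. \<Sum>a\<in>UNIV. w a * delta a z)"
proof
  fix z
  have "(\<Sum>a\<in>UNIV. w a * delta a z) = (\<Sum>a\<in>{z}. w a * delta a z)"
    by (rule sum.mono_neutral_right) (auto simp: delta_def)
  then show "w z = (\<Sum>a\<in>UNIV. w a * delta a z)" by (simp add: delta_def)
qed

lemma lin_eqI:
  fixes f g :: "('a::finite \<Rightarrow> 'k::field) \<Rightarrow> ('b \<Rightarrow> 'k)"
  assumes "lin f" "lin g" "\<And>a. f (delta a) = g (delta a)"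
  shows "f = g"
proof
  fix w
  show "f w = g w"
    by (subst (1 2) delta_expansion) (simp add: lin_sum assms)
qed

lemma delta_Pair: "delta (a, b) = tens (delta a) (delta b)"
  by (auto simp: delta_def tens_def)

lemma lin_eq_on_tens:
  fixes F G :: "('a::finite \<times> 'b::finite \<Rightarrow> 'k::field) \<Rightarrow> ('c \<Rightarrow> 'k)"
  assumes "lin F" "lin G" "\<And>x y. F (tens x y) = G (tens x y)"
  shows "F = G"
  using assms by (intro lin_eqI) (auto simp: delta_Pair)

lemma lin_id [simp]: "lin id" "lin (\<lambda>x. x)"
  by (auto simp: lin_def)

lemma lin_comp [simp]: "lin f \<Longrightarrow> lin g \<Longrightarrow> lin (f \<circ> g)"
  and lin_compose: "lin f \<Longrightarrow> lin g \<Longrightarrow> lin (\<lambda>x. f (g x))"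
  by (auto simp: lin_def)

lemma lin_tens_left [simp]: "lin (\<lambda>x. tens x (y::'b \<Rightarrow> 'k::field))"
  and lin_tens_right [simp]: "lin (tens (x::'a \<Rightarrow> 'k::field))"
  by (auto simp: lin_def tens_def fun_eq_iff algebra_simps)

lemma lin_tmap [simp]: "lin f \<Longrightarrow> lin g \<Longrightarrow> lin (tmap f g)"
  by (auto simp: lin_def tmap_def fun_eq_iff)

lemma lin_reassoc [simp]: "lin reassoc"
  and lin_mid [simp]: "lin mid"
  by (auto simp: lin_def reassoc_def mid_def fun_eq_iff)

lemma lin_inv:
  assumes "lin f" "bij f"
  shows "lin (inv f)"
proof -
  have f_inv: "f (inv f y) = y" and inv_f: "inv f (f x) = x" for x y
    using assms(2) by (simp_all add: bij_is_surj bij_is_inj surj_f_inv_f inv_f_f)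
  have "inv f (\<lambda>a. x a + y a) = (\<lambda>b. inv f x b + inv f y b)" for x y
    using lin_add[OF assms(1), of "inv f x" "inv f y"] by (metis f_inv inv_f)
  moreover have "inv f (\<lambda>a. c * x a) = (\<lambda>b. c * inv f x b)" for c x
    using lin_scale[OF assms(1), of c "inv f x"] by (metis f_inv inv_f)
  ultimately show ?thesis by (simp add: lin_def)
qed

lemma lin_eq_on_tens3:
  fixes F G :: "(('a::finite \<times> 'b::finite) \<times> 'c::finite \<Rightarrow> 'k::field) \<Rightarrow> ('d \<Rightarrow> 'k)"
  assumes "lin F" "lin G" "\<And>x y z. F (tens (tens x y) z) = G (tens (tens x y) z)"
  shows "F = G"
proof (rule lin_eq_on_tens[OF assms(1,2)])
  fix w z
  have "F \<circ> (\<lambda>w. tens w z) = G \<circ> (\<lambda>w. tens w z)"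
    using assms by (intro lin_eq_on_tens) simp_all
  then show "F (tens w z) = G (tens w z)" by (metis comp_apply)
qed

lemma lin_eq_on_tens4:
  fixes F G :: "(('a::finite \<times> 'b::finite) \<times> ('c::finite \<times> 'e::finite) \<Rightarrow> 'k::field) \<Rightarrow> ('d \<Rightarrow> 'k)"
  assumes "lin F" "lin G"
    "\<And>a b c d. F (tens (tens a b) (tens c d)) = G (tens (tens a b) (tens c d))"
  shows "F = G"
proof (rule lin_eq_on_tens[OF assms(1,2)])
  fix w z
  have "F \<circ> tens w = G \<circ> tens w"
  proof (rule lin_eq_on_tens)
    fix c d
    have "F \<circ> (\<lambda>w. tens w (tens c d)) = G \<circ> (\<lambda>w. tens w (tens c d))"
      using assms by (intro lin_eq_on_tens) simp_all
    then show "(F \<circ> tens w) (tens c d) = (G \<circ> tens w) (tens c d)" by (metis comp_apply)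
  qed (use assms in simp_all)
  then show "F (tens w z) = G (tens w z)" by (metis comp_apply)
qed

lemma lin_eq_on_tens4_left:
  fixes F G :: "((('a::finite \<times> 'b::finite) \<times> 'c::finite) \<times> 'd::finite \<Rightarrow> 'k::field) \<Rightarrow> ('e \<Rightarrow> 'k)"
  assumes "lin F" "lin G"
    "\<And>a b c d. F (tens (tens (tens a b) c) d) = G (tens (tens (tens a b) c) d)"
  shows "F = G"
proof (rule lin_eq_on_tens[OF assms(1,2)])
  fix x y
  have "F \<circ> (\<lambda>x. tens x y) = G \<circ> (\<lambda>x. tens x y)"
    using assms by (intro lin_eq_on_tens3) simp_all
  then show "F (tens x y) = G (tens x y)" by (metis comp_apply)
qed

lemma lin_eq_on_tens6:
  fixes F G :: "((('a::finite \<times> 'b::finite) \<times> ('c::finite \<times> 'd::finite)) \<times> ('e::finite \<times> 'f::finite)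
                 \<Rightarrow> 'k::field) \<Rightarrow> ('g \<Rightarrow> 'k)"
  assumes "lin F" "lin G"
    "\<And>a b c d e f. F (tens (tens (tens a b) (tens c d)) (tens e f))
                 = G (tens (tens (tens a b) (tens c d)) (tens e f))"
  shows "F = G"
proof (rule lin_eq_on_tens[OF assms(1,2)])
  fix x y
  have "F \<circ> (\<lambda>x. tens x y) = G \<circ> (\<lambda>x. tens x y)"
  proof (rule lin_eq_on_tens4)
    fix a b c d
    have "F \<circ> tens (tens (tens a b) (tens c d)) = G \<circ> tens (tens (tens a b) (tens c d))"
      using assms by (intro lin_eq_on_tens) simp_all
    then show "(F \<circ> (\<lambda>x. tens x y)) (tens (tens a b) (tens c d))
             = (G \<circ> (\<lambda>x. tens x y)) (tens (tens a b) (tens c d))"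
      by (metis comp_apply)
  qed (use assms in simp_all)
  then show "F (tens x y) = G (tens x y)" by (metis comp_apply)
qed

lemma tmap_tens:
  assumes "lin f" "lin g"
  shows "tmap f g (tens x y) = tens (f x) (g y)"
proof -
  have "g (\<lambda>c. x a * y c) = (\<lambda>d. x a * g y d)" for a
    using lin_scale[OF assms(2)] by simp
  moreover have "f (\<lambda>a. g y d * x a) = (\<lambda>b. g y d * f x b)" for d
    using lin_scale[OF assms(1)] by simp
  ultimately show ?thesis
    by (auto simp: tmap_def tens_def fun_eq_iff mult.commute)
qed

lemma tens_scale: "tens (\<lambda>b. c * (y::'a \<Rightarrow> 'k::field) b) z = (\<lambda>w. c * tens y z w)"
  "tens z (\<lambda>b. c * (y::'a \<Rightarrow> 'k::field) b) = (\<lambda>w. c * tens z y w)"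
  by (auto simp: tens_def fun_eq_iff mult_ac)

lemma reassoc_tens: "reassoc (tens (tens (x::'a \<Rightarrow> 'k::field) y) z) = tens x (tens y z)"
  by (auto simp: reassoc_def tens_def fun_eq_iff mult.assoc)

lemma mid_tens: "mid (tens (tens (a::'a \<Rightarrow> 'k::field) b) (tens c d)) = tens (tens a c) (tens b d)"
  by (auto simp: mid_def tens_def fun_eq_iff mult_ac)

lemma tmap_id: "tmap id id = id" "tmap (\<lambda>x. x) (\<lambda>x. x) w = w"
  by (auto simp: tmap_def fun_eq_iff)

lemma tmap_comp:
  fixes f :: "('b \<Rightarrow> 'k::field) \<Rightarrow> ('c \<Rightarrow> 'k)" and f' :: "('a::finite \<Rightarrow> 'k) \<Rightarrow> ('b \<Rightarrow> 'k)"
    and g :: "('e \<Rightarrow> 'k) \<Rightarrow> ('x \<Rightarrow> 'k)" and g' :: "('d::finite \<Rightarrow> 'k) \<Rightarrow> ('e \<Rightarrow> 'k)"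
  assumes "lin f" "lin g" "lin f'" "lin g'"
  shows "tmap f g (tmap f' g' w) = tmap (f \<circ> f') (g \<circ> g') w"
proof -
  have "tmap f g \<circ> tmap f' g' = tmap (f \<circ> f') (g \<circ> g')"
    using assms by (intro lin_eq_on_tens) (simp_all add: tmap_tens)
  then show ?thesis by (metis comp_apply)
qed

lemma tmap_compose:
  fixes f :: "('a::finite \<Rightarrow> 'k::field) \<Rightarrow> ('b \<Rightarrow> 'k)" and f' :: "('b \<Rightarrow> 'k) \<Rightarrow> ('c \<Rightarrow> 'k)"
    and g :: "('d::finite \<Rightarrow> 'k) \<Rightarrow> ('e \<Rightarrow> 'k)" and g' :: "('e \<Rightarrow> 'k) \<Rightarrow> ('x \<Rightarrow> 'k)"
  assumes "lin f" "lin f'" "lin g" "lin g'"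
  shows "tmap (f' \<circ> f) (g' \<circ> g) = tmap f' g' \<circ> tmap f g"
  using assms by (simp add: fun_eq_iff tmap_comp)

lemma tmap_reassoc:
  fixes f :: "('a::finite \<Rightarrow> 'k::field) \<Rightarrow> ('a2 \<Rightarrow> 'k)" and g :: "('b::finite \<Rightarrow> 'k) \<Rightarrow> ('b2 \<Rightarrow> 'k)"
    and h :: "('c::finite \<Rightarrow> 'k) \<Rightarrow> ('c2 \<Rightarrow> 'k)"
  assumes "lin f" "lin g" "lin h"
  shows "reassoc (tmap (tmap f g) h w) = tmap f (tmap g h) (reassoc w)"
proof -
  have "reassoc \<circ> tmap (tmap f g) h = tmap f (tmap g h) \<circ> reassoc"
    using assms by (intro lin_eq_on_tens3) (simp_all add: tmap_tens reassoc_tens)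
  then show ?thesis by (metis comp_apply)
qed

lemma tmap_mid:
  fixes f :: "('a::finite \<Rightarrow> 'k::field) \<Rightarrow> ('a2 \<Rightarrow> 'k)" and g :: "('b::finite \<Rightarrow> 'k) \<Rightarrow> ('b2 \<Rightarrow> 'k)"
    and h :: "('c::finite \<Rightarrow> 'k) \<Rightarrow> ('c2 \<Rightarrow> 'k)" and k :: "('d::finite \<Rightarrow> 'k) \<Rightarrow> ('d2 \<Rightarrow> 'k)"
  assumes "lin f" "lin g" "lin h" "lin k"
  shows "mid (tmap (tmap f g) (tmap h k) w) = tmap (tmap f h) (tmap g k) (mid w)"
proof -
  have "mid \<circ> tmap (tmap f g) (tmap h k) = tmap (tmap f h) (tmap g k) \<circ> mid"
    using assms by (intro lin_eq_on_tens4) (simp_all add: tmap_tens mid_tens)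
  then show ?thesis by (metis comp_apply)
qed

lemma mid_tens_tmap:
  fixes f :: "('a::finite \<Rightarrow> 'k::field) \<Rightarrow> ('a2::finite \<Rightarrow> 'k)" and g :: "('b::finite \<Rightarrow> 'k) \<Rightarrow> ('b2::finite \<Rightarrow> 'k)"
    and h :: "('c::finite \<Rightarrow> 'k) \<Rightarrow> ('c2::finite \<Rightarrow> 'k)" and k :: "('d::finite \<Rightarrow> 'k) \<Rightarrow> ('d2::finite \<Rightarrow> 'k)"
  assumes "lin f" "lin g" "lin h" "lin k"
  shows "mid (tens (tmap f g s) (tmap h k t)) = tmap (tmap f h) (tmap g k) (mid (tens s t))"
  using assms by (simp add: tmap_tens[symmetric] tmap_mid)

lemma mid_tens_left:
  fixes t :: "'a::finite \<times> 'b::finite \<Rightarrow> 'k::field"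
  shows "mid (tens (tens u v) t) = tmap (tens u) (tens v) t"
proof -
  have "(\<lambda>t::'a \<times> 'b \<Rightarrow> 'k. mid (tens (tens u v) t)) = tmap (tens u) (tens v)"
    by (rule lin_eq_on_tens) (simp_all add: lin_compose tmap_tens mid_tens)
  then show ?thesis by metis
qed

lemma mid_tens_right:
  fixes t :: "'a::finite \<times> 'b::finite \<Rightarrow> 'k::field"
  shows "mid (tens t (tens u v)) = tmap (\<lambda>y. tens y u) (\<lambda>s. tens s v) t"
proof -
  have "mid \<circ> (\<lambda>t::'a \<times> 'b \<Rightarrow> 'k. tens t (tens u v)) = tmap (\<lambda>y. tens y u) (\<lambda>s. tens s v)"
    by (rule lin_eq_on_tens) (simp_all add: tmap_tens mid_tens)
  then show ?thesis by (metis comp_apply)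
qed

lemma bij_tmap:
  fixes f :: "('a::finite \<Rightarrow> 'k::field) \<Rightarrow> ('a \<Rightarrow> 'k)" and g :: "('b::finite \<Rightarrow> 'k) \<Rightarrow> ('b \<Rightarrow> 'k)"
  assumes "lin f" "bij f" "lin g" "bij g"
  shows "bij (tmap f g)"
proof (rule o_bij)
  have inverses: "inv f \<circ> f = id" "f \<circ> inv f = id" "inv g \<circ> g = id" "g \<circ> inv g = id"
    using assms by (simp_all add: bij_is_inj bij_is_surj fun_eq_iff surj_f_inv_f inv_f_f)
  show "tmap (inv f) (inv g) \<circ> tmap f g = id" "tmap f g \<circ> tmap (inv f) (inv g) = id"
    by (rule ext, simp add: assms tmap_comp lin_inv inverses tmap_id)+
qed

lemma bij_reassoc: "bij reassoc"
  by (rule o_bij[where g="\<lambda>w ((a, b), c). w (a, b, c)"]) (auto simp: fun_eq_iff reassoc_def)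

lemmas tmap_simps = tmap_tens tmap_comp mid_tens reassoc_tens tmap_reassoc tmap_mid mid_tens_left
  comp_assoc

definition swap23 :: "(('a \<times> 'b) \<times> 'c \<Rightarrow> 'k) \<Rightarrow> (('a \<times> 'c) \<times> 'b \<Rightarrow> 'k)" where
  "swap23 w = (\<lambda>((a, c), b). w ((a, b), c))"

lemma lin_swap23 [simp]: "lin swap23"
  by (auto simp: lin_def swap23_def fun_eq_iff)

lemma swap23_tens: "swap23 (tens (tens x y) (z::'c \<Rightarrow> 'k::field)) = tens (tens x z) y"
  by (auto simp: swap23_def tens_def fun_eq_iff mult_ac)

lemma tmap_slot_swap23:
  fixes F :: "('a::finite \<times> 'c::finite \<Rightarrow> 'k::field) \<Rightarrow> ('d \<Rightarrow> 'k)" and g :: "('b::finite \<Rightarrow> 'k) \<Rightarrow> ('e \<Rightarrow> 'k)"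
  assumes "lin F" "lin g"
  shows "tmap (\<lambda>x. F (tens x c)) g Y = tmap F g (swap23 (tens Y c))"
proof -
  have "lin (\<lambda>x. F (tens x c))" by (rule lin_compose[OF assms(1) lin_tens_left])
  then have "tmap (\<lambda>x. F (tens x c)) g = tmap F g \<circ> swap23 \<circ> (\<lambda>Y. tens Y c)"
    using assms by (intro lin_eq_on_tens) (simp_all add: tmap_tens swap23_tens)
  then show ?thesis by (metis comp_apply)
qed

definition drop_unit_left :: "(unit \<times> 'x \<Rightarrow> 'k) \<Rightarrow> ('x \<Rightarrow> 'k)" where
  "drop_unit_left w = (\<lambda>x. w ((), x))"

definition drop_unit_right :: "('x \<times> unit \<Rightarrow> 'k) \<Rightarrow> ('x \<Rightarrow> 'k)" where
  "drop_unit_right w = (\<lambda>x. w (x, ()))"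

lemma lin_drop_unit [simp]: "lin drop_unit_left" "lin drop_unit_right"
  by (simp_all add: lin_def drop_unit_left_def drop_unit_right_def)

lemma bij_drop_unit: "bij drop_unit_left" "bij drop_unit_right"
  by (rule o_bij[where g = "\<lambda>v (_, x). v x"], auto simp: fun_eq_iff drop_unit_left_def)
    (rule o_bij[where g = "\<lambda>v (x, _). v x"], auto simp: fun_eq_iff drop_unit_right_def)

lemma drop_unit_tens:
  fixes c :: "unit \<Rightarrow> 'k::field"
  shows "drop_unit_left (tens c x) = (\<lambda>b. c () * x b)"
  "drop_unit_right (tens x c) = (\<lambda>b. c () * x b)"
  by (simp_all add: drop_unit_left_def drop_unit_right_def tens_def fun_eq_iff mult.commute)

lemma lin_eq_on_unit_tens:
  fixes F G :: "(unit \<times> 'a::finite \<Rightarrow> 'k::field) \<Rightarrow> ('b \<Rightarrow> 'k)"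
    and F' G' :: "('a \<times> unit \<Rightarrow> 'k) \<Rightarrow> ('b \<Rightarrow> 'k)"
  shows "lin F \<Longrightarrow> lin G \<Longrightarrow> (\<And>x. F (tens (\<lambda>_. 1) x) = G (tens (\<lambda>_. 1) x)) \<Longrightarrow> F = G"
    and "lin F' \<Longrightarrow> lin G' \<Longrightarrow> (\<And>x. F' (tens x (\<lambda>_. 1)) = G' (tens x (\<lambda>_. 1))) \<Longrightarrow> F' = G'"
proof -
  have unit_delta: "delta () = (\<lambda>_. 1 :: 'k)" by (simp add: delta_def fun_eq_iff)
  show "lin F \<Longrightarrow> lin G \<Longrightarrow> (\<And>x. F (tens (\<lambda>_. 1) x) = G (tens (\<lambda>_. 1) x)) \<Longrightarrow> F = G"
    by (rule lin_eqI) (auto simp: delta_Pair unit_delta)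
  show "lin F' \<Longrightarrow> lin G' \<Longrightarrow> (\<And>x. F' (tens x (\<lambda>_. 1)) = G' (tens x (\<lambda>_. 1))) \<Longrightarrow> F' = G'"
    by (rule lin_eqI) (auto simp: delta_Pair unit_delta)
qed

section \<open>Integer powers of a bijection\<close>

lemma zpow_0 [simp]: "zpow f 0 x = x"
  and zpow_1: "zpow f 1 = f"
  by (simp_all add: zpow_def)

lemma zpow_succ:
  assumes "bij f"
  shows "zpow f (n + 1) x = f (zpow f n x)"
proof -
  consider "0 \<le> n" | "n = -1" | "n < -1" by linarith
  then show ?thesis
  proof cases
    case 1
    then have "nat (n + 1) = Suc (nat n)" by simp
    with 1 show ?thesis by (simp add: zpow_def)
  next
    case 3
    then have "nat (- n) = Suc (nat (- (n + 1)))" by simp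
    with 3 show ?thesis using assms by (simp add: zpow_def bij_is_surj surj_f_inv_f)
  qed (use assms in \<open>simp add: zpow_def bij_is_surj surj_f_inv_f\<close>)
qed

lemma zpow_pred:
  assumes "bij f"
  shows "zpow f (n - 1) x = inv f (zpow f n x)"
  using zpow_succ[OF assms, of "n - 1" x] assms by (simp add: bij_is_inj inv_f_f)

lemma zpow_add:
  assumes "bij f"
  shows "zpow f (a + b) x = zpow f a (zpow f b x)"
proof (induction a rule: int_induct[where k = 0])
  case (step1 i)
  then show ?case using zpow_succ[OF assms, of "i + b"] zpow_succ[OF assms, of i]
    by (simp add: add_ac)
next
  case (step2 i)
  then show ?case using zpow_pred[OF assms, of "i + b"] zpow_pred[OF assms, of i]
    by (simp add: add_ac add_diff_eq)
qed simp

lemma zpow_zpow: "bij f \<Longrightarrow> zpow f a (zpow f b x) = zpow f (a + b) x"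
  by (simp add: zpow_add)

lemma zpow_commute:
  assumes "bij a" "bij b" and commute: "\<And>x. f (a x) = b (f x)"
  shows "f (zpow a n x) = zpow b n (f x)"
proof (induction n rule: int_induct[where k = 0])
  case (step1 i)
  then show ?case by (simp add: zpow_succ assms)
next
  case (step2 i)
  have "b (f (zpow a (i - 1) x)) = f (zpow a i x)"
    using zpow_succ[OF assms(1), of "i - 1"] commute by simp
  also have "\<dots> = b (zpow b (i - 1) (f x))"
    using step2 zpow_succ[OF assms(2), of "i - 1"] by simp
  finally show ?case using assms(2) by (simp add: bij_is_inj inj_eq)
qed simp

lemma zpow_self_commute: "bij f \<Longrightarrow> zpow f n (f x) = f (zpow f n x)"
  using zpow_commute[of f f f] by simp

lemma zpow_fixed: "bij f \<Longrightarrow> f x = x \<Longrightarrow> zpow f n x = x"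
  using zpow_commute[of id f "\<lambda>_::unit. x" n] by (simp add: zpow_def)

lemma zpow_id [simp]: "zpow id n = id"
  by (simp add: zpow_def)

lemma lin_zpow:
  fixes f :: "('a \<Rightarrow> 'k::field) \<Rightarrow> ('a \<Rightarrow> 'k)"
  assumes "lin f" "bij f"
  shows "lin (zpow f n)"
proof -
  have "lin (g ^^ m)" if "lin g" for g :: "('a \<Rightarrow> 'k) \<Rightarrow> ('a \<Rightarrow> 'k)" and m
    using that by (induction m) (simp_all add: lin_compose)
  then show ?thesis by (simp add: zpow_def assms lin_inv)
qed

lemma bij_zpow: "bij f \<Longrightarrow> bij (zpow f n)"
  by (simp add: zpow_def bij_fn bij_imp_bij_inv)

lemma zpow_tmap:
  fixes f :: "('a::finite \<Rightarrow> 'k::field) \<Rightarrow> ('a \<Rightarrow> 'k)" and g :: "('b::finite \<Rightarrow> 'k) \<Rightarrow> ('b \<Rightarrow> 'k)"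
  assumes "lin f" "bij f" "lin g" "bij g"
  shows "zpow (tmap f g) n = tmap (zpow f n) (zpow g n)"
proof
  fix w
  have bij_fg: "bij (tmap f g)" by (rule bij_tmap[OF assms])
  have succ: "tmap (zpow f (m + 1)) (zpow g (m + 1)) w' = tmap f g (tmap (zpow f m) (zpow g m) w')"
    for m w'
  proof -
    have "zpow f (m + 1) = f \<circ> zpow f m" "zpow g (m + 1) = g \<circ> zpow g m"
      by (simp_all add: fun_eq_iff zpow_succ assms)
    then show ?thesis using assms by (simp add: tmap_comp lin_zpow)
  qed
  show "zpow (tmap f g) n w = tmap (zpow f n) (zpow g n) w"
  proof (induction n rule: int_induct[where k = 0])
    case base
    then show ?case by (simp add: tmap_id)
  next
    case (step1 i)
    then show ?case by (simp add: zpow_succ bij_fg succ)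
  next
    case (step2 i)
    then have "tmap f g (zpow (tmap f g) (i - 1) w) = tmap f g (tmap (zpow f (i - 1)) (zpow g (i - 1)) w)"
      using zpow_succ[OF bij_fg, of "i - 1"] succ[of "i - 1"] by simp
    then show ?case using bij_fg by (simp add: bij_is_inj inj_eq)
  qed
qed

section \<open>Hom-bialgebras and Hom-Long dimodules\<close>

lemma
  assumes "ld_mor H U V f"
  shows ld_mor_lin: "lin f"
    and ld_mor_dal: "f (dal U u) = dal V (f u)"
    and ld_mor_dact: "f (dact U (tens u h)) = dact V (tens (f u) h)"
    and ld_mor_dco: "dco V (f u) = tmap f id (dco U u)"
  using assms by (simp_all add: ld_mor_def)

lemma ld_mor_inv:
  fixes X :: "('k::field, 'h::finite, 'x1::finite) dimod" and Y :: "('k, 'h, 'x2::finite) dimod"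
  assumes f: "ld_mor H X Y f" and "bij f"
  shows "ld_mor H Y X (inv f)"
proof -
  have f_inv: "f (inv f y) = y" and inv_f: "inv f (f x) = x" for x y
    using \<open>bij f\<close> by (simp_all add: bij_is_surj bij_is_inj surj_f_inv_f inv_f_f)
  have lin_inv_f: "lin (inv f)" by (rule lin_inv[OF ld_mor_lin[OF f] \<open>bij f\<close>])
  have "dco X (inv f y) = tmap (inv f) id (dco Y y)" for y
  proof -
    have "tmap (inv f) id (dco Y y) = tmap (inv f) id (tmap f id (dco X (inv f y)))"
      using ld_mor_dco[OF f, of "inv f y"] f_inv by simp
    also have "\<dots> = dco X (inv f y)"
      using lin_inv_f ld_mor_lin[OF f] by (simp add: tmap_comp comp_def inv_f tmap_id(2))
    finally show ?thesis by simp
  qed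
  moreover have "inv f (dal Y y) = dal X (inv f y)" for y
    by (metis ld_mor_dal[OF f] f_inv inv_f)
  moreover have "inv f (dact Y (tens y h)) = dact X (tens (inv f y) h)" for y h
    by (metis ld_mor_dact[OF f] f_inv inv_f)
  ultimately show ?thesis unfolding ld_mor_def using lin_inv_f by simp
qed

locale hom_bialg =
  fixes H :: "('k::field, 'h::finite) hbialg"
  assumes hom_bialgebra: "hom_bialgebra H"
begin

abbreviation "\<mu> \<equiv> hm H"
abbreviation "\<eta> \<equiv> hone H"
abbreviation "\<Delta> \<equiv> hcom H"
abbreviation "\<epsilon> \<equiv> hcou H"
abbreviation "\<alpha> \<equiv> halpha H"
abbreviation "\<alpha>pow n \<equiv> zpow (halpha H) n"
abbreviation "twisted_mult i j \<equiv> \<mu> \<circ> tmap (\<alpha>pow i) (\<alpha>pow j)"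

lemma lin_mult [simp]: "lin \<mu>"
  and lin_comult [simp]: "lin \<Delta>"
  and linf_counit: "linf \<epsilon>"
  and lin_alpha [simp]: "lin \<alpha>"
  and bij_alpha: "bij \<alpha>"
  and mult_hom_assoc: "\<mu> (tens (\<alpha> a) (\<mu> (tens b c))) = \<mu> (tens (\<mu> (tens a b)) (\<alpha> c))"
  and alpha_one [simp]: "\<alpha> \<eta> = \<eta>"
  and mult_one_left: "\<mu> (tens \<eta> a) = \<alpha> a"
  and mult_one_right: "\<mu> (tens a \<eta>) = \<alpha> a"
  and alpha_mult: "\<alpha> (\<mu> (tens a b)) = \<mu> (tens (\<alpha> a) (\<alpha> b))"
  and counit_alpha [simp]: "\<epsilon> (\<alpha> c) = \<epsilon> c"
  and comult_hom_coassoc: "tmap \<alpha> \<Delta> (\<Delta> c) = reassoc (tmap \<Delta> \<alpha> (\<Delta> c))"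
  and counit_left: "(\<lambda>b. \<epsilon> (\<lambda>a. \<Delta> c (a, b))) = \<alpha> c"
  and counit_right: "(\<lambda>a. \<epsilon> (\<lambda>b. \<Delta> c (a, b))) = \<alpha> c"
  and comult_alpha: "\<Delta> (\<alpha> c) = tmap \<alpha> \<alpha> (\<Delta> c)"
  and comult_mult: "\<Delta> (\<mu> (tens a b)) = tmap \<mu> \<mu> (mid (tens (\<Delta> a) (\<Delta> b)))"
  and comult_one [simp]: "\<Delta> \<eta> = tens \<eta> \<eta>"
  and counit_mult: "\<epsilon> (\<mu> (tens a b)) = \<epsilon> a * \<epsilon> b"
  and counit_one [simp]: "\<epsilon> \<eta> = 1"
  using hom_bialgebra unfolding hom_bialgebra_def Let_def by blast+

lemma counit_add: "\<epsilon> (\<lambda>a. x a + y a) = \<epsilon> x + \<epsilon> y"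
  and counit_scale: "\<epsilon> (\<lambda>a. c * x a) = c * \<epsilon> x"
  using linf_counit by (simp_all add: linf_def)

lemma lin_alpha_pow [simp]: "lin (\<alpha>pow n)"
  by (rule lin_zpow[OF lin_alpha bij_alpha])

lemma alpha_pow_add [simp]: "\<alpha>pow a (\<alpha>pow b x) = \<alpha>pow (a + b) x"
  by (simp add: zpow_add bij_alpha)

lemma alpha_as_pow: "\<alpha> x = \<alpha>pow 1 x"
  by (simp add: zpow_1)

lemma alpha_alpha_pow: "\<alpha> (\<alpha>pow n x) = \<alpha>pow n (\<alpha> x)"
  by (simp add: zpow_self_commute bij_alpha)

lemma alpha_pow_one [simp]: "\<alpha>pow n \<eta> = \<eta>"
  by (simp add: zpow_fixed bij_alpha)

lemma counit_alpha_pow [simp]: "\<epsilon> (\<alpha>pow n c) = \<epsilon> c"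
  using zpow_commute[OF bij_alpha bij_id, of \<epsilon>] by simp

lemma comult_alpha_pow: "\<Delta> (\<alpha>pow n c) = tmap (\<alpha>pow n) (\<alpha>pow n) (\<Delta> c)"
  using zpow_commute[of \<alpha> "tmap \<alpha> \<alpha>" \<Delta>]
  by (simp add: bij_alpha bij_tmap comult_alpha zpow_tmap)

lemma mult_alpha_pow: "\<mu> (tens (\<alpha>pow n a) (\<alpha>pow n b)) = \<alpha>pow n (\<mu> (tens a b))"
proof -
  have "\<mu> \<circ> tmap \<alpha> \<alpha> = \<alpha> \<circ> \<mu>"
    by (rule lin_eq_on_tens) (simp_all add: tmap_tens alpha_mult)
  then have "\<mu> (zpow (tmap \<alpha> \<alpha>) n w) = \<alpha>pow n (\<mu> w)" for w
    using zpow_commute[of "tmap \<alpha> \<alpha>" \<alpha> \<mu>] by (simp add: bij_alpha bij_tmap fun_eq_iff)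
  from this[of "tens a b"] show ?thesis
    by (simp add: zpow_tmap[OF lin_alpha bij_alpha lin_alpha bij_alpha] tmap_tens)
qed

lemma mult_hom_assoc_pow:
  "\<mu> (tens (\<alpha>pow (1 + a) x) (\<mu> (tens (\<alpha>pow b y) (\<alpha>pow c z))))
   = \<mu> (tens (\<mu> (tens (\<alpha>pow a x) (\<alpha>pow b y))) (\<alpha>pow (1 + c) z))"
  using mult_hom_assoc[of "\<alpha>pow a x" "\<alpha>pow b y" "\<alpha>pow c z"] by (simp add: alpha_as_pow)

text \<open>Hom-coassociativity solved for \<open>(id \<otimes> \<Delta>) \<Delta>\<close>.\<close>

lemma comult_coassoc_id_left:
  "tmap id \<Delta> (\<Delta> c) = reassoc (tmap (tmap (\<alpha>pow (-1)) id) \<alpha> (tmap \<Delta> id (\<Delta> c)))"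
proof -
  have alpha_inverse: "\<alpha>pow (-1) \<circ> \<alpha> = id"
    by (simp add: fun_eq_iff alpha_as_pow)
  have "tmap id \<Delta> (\<Delta> c) = tmap (\<alpha>pow (-1)) id (tmap \<alpha> \<Delta> (\<Delta> c))"
    by (simp add: tmap_comp alpha_inverse)
  also have "\<dots> = tmap (\<alpha>pow (-1)) id (reassoc (tmap \<Delta> \<alpha> (\<Delta> c)))"
    by (simp add: comult_hom_coassoc)
  also have "\<dots> = reassoc (tmap (tmap (\<alpha>pow (-1)) id) id (tmap \<Delta> \<alpha> (\<Delta> c)))"
    by (simp add: tmap_reassoc tmap_id)
  also have "\<dots> = reassoc (tmap (tmap (\<alpha>pow (-1)) id) \<alpha> (tmap \<Delta> id (\<Delta> c)))"
    by (simp add: tmap_comp)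
  finally show ?thesis .
qed

definition eps_left :: "('h \<times> 'x \<Rightarrow> 'k) \<Rightarrow> ('x \<Rightarrow> 'k)" where
  "eps_left w = (\<lambda>x. \<epsilon> (\<lambda>h. w (h, x)))"

definition eps_right :: "('x \<times> 'h \<Rightarrow> 'k) \<Rightarrow> ('x \<Rightarrow> 'k)" where
  "eps_right w = (\<lambda>x. \<epsilon> (\<lambda>h. w (x, h)))"

lemma lin_eps_left [simp]: "lin eps_left"
  and lin_eps_right [simp]: "lin eps_right"
  by (simp_all add: lin_def eps_left_def eps_right_def counit_add counit_scale)

lemma counit_scale_right: "\<epsilon> (\<lambda>a. x a * c) = \<epsilon> x * c"
proof -
  have "(\<lambda>a. x a * c) = (\<lambda>a. c * x a)" by (simp add: fun_eq_iff mult.commute)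
  then show ?thesis by (simp add: counit_scale mult.commute)
qed

lemma eps_left_tens: "eps_left (tens c x) = (\<lambda>a. \<epsilon> c * x a)"
  by (simp add: eps_left_def tens_def counit_scale_right)

lemma eps_right_tens: "eps_right (tens x c) = (\<lambda>a. \<epsilon> c * x a)"
  by (simp add: eps_right_def tens_def counit_scale) (simp add: mult.commute)

lemma eps_left_comult: "eps_left (\<Delta> h) = \<alpha> h"
  and eps_right_comult: "eps_right (\<Delta> h) = \<alpha> h"
  using counit_left counit_right by (simp_all add: eps_left_def eps_right_def)

lemma
  assumes "hom_long_dimod H U"
  shows lin_dal [simp]: "lin (dal U)"
    and bij_dal: "bij (dal U)"
    and lin_dact [simp]: "lin (dact U)"
    and lin_dco [simp]: "lin (dco U)"
    and dact_assoc: "dact U (tens (dact U (tens u a)) (\<alpha> b)) = dact U (tens (dal U u) (\<mu> (tens a b)))"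
    and dact_one: "dact U (tens u \<eta>) = dal U u"
    and dco_coassoc: "tmap (dal U) \<Delta> (dco U u) = reassoc (tmap (dco U) \<alpha> (dco U u))"
    and dco_counit: "(\<lambda>x. \<epsilon> (\<lambda>h. dco U u (x, h))) = dal U u"
    and dal_dact: "dal U (dact U (tens u h)) = dact U (tens (dal U u) (\<alpha> h))"
    and dco_dal: "dco U (dal U u) = tmap (dal U) \<alpha> (dco U u)"
    and dco_dact: "dco U (dact U (tens u h)) = tmap (\<lambda>x. dact U (tens x (\<alpha> h))) \<alpha> (dco U u)"
  using assms unfolding hom_long_dimod_def Let_def by blast+

lemma lin_zpow_dal [simp]: "hom_long_dimod H U \<Longrightarrow> lin (zpow (dal U) n)"
  by (simp add: lin_zpow bij_dal)

lemma zpow_dal_dact: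
  fixes U :: "('k, 'h, 'u::finite) dimod"
  assumes "hom_long_dimod H U"
  shows "zpow (dal U) n (dact U (tens u s)) = dact U (tens (zpow (dal U) n u) (\<alpha>pow n s))"
proof -
  have "dact U \<circ> tmap (dal U) \<alpha> = dal U \<circ> dact U"
    using assms by (intro lin_eq_on_tens) (simp_all add: tmap_tens dal_dact)
  then have "dact U (zpow (tmap (dal U) \<alpha>) n w) = zpow (dal U) n (dact U w)" for w
    using assms zpow_commute[of "tmap (dal U) \<alpha>" "dal U" "dact U"]
    by (simp add: bij_tmap bij_dal bij_alpha fun_eq_iff)
  from this[of "tens u s"] show ?thesis
    using assms by (simp add: zpow_tmap bij_dal bij_alpha tmap_tens)
qed

lemma dco_zpow_dal:
  fixes U :: "('k, 'h, 'u::finite) dimod"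
  assumes "hom_long_dimod H U"
  shows "dco U (zpow (dal U) n u) = tmap (zpow (dal U) n) (\<alpha>pow n) (dco U u)"
  using assms zpow_commute[of "dal U" "tmap (dal U) \<alpha>" "dco U"]
  by (simp add: bij_tmap bij_dal bij_alpha dco_dal zpow_tmap)

lemma dco_dact_swap23:
  fixes U :: "('k, 'h, 'u::finite) dimod"
  assumes "hom_long_dimod H U"
  shows "dco U (dact U (tens u c)) = tmap (dact U) \<alpha> (swap23 (tens (dco U u) (\<alpha> c)))"
  using assms by (simp add: dco_dact tmap_slot_swap23)

lemma eps_right_twisted_mult:
  "eps_right \<circ> tmap id (twisted_mult i j) \<circ> mid
     = tmap (eps_right :: ('u::finite \<times> 'h \<Rightarrow> 'k) \<Rightarrow> _) (eps_right :: ('v::finite \<times> 'h \<Rightarrow> 'k) \<Rightarrow> _)"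
  by (rule lin_eq_on_tens4, simp_all add: tmap_simps eps_right_tens counit_mult)
    (simp add: tens_def fun_eq_iff)

lemma twisted_mult_alpha:
  "\<mu> \<circ> (tmap (\<alpha>pow i) (\<alpha>pow j) \<circ> tmap \<alpha> \<alpha>) = \<alpha> \<circ> (twisted_mult i j)"
  by (rule lin_eq_on_tens) (simp_all add: tmap_simps alpha_mult alpha_alpha_pow)

section \<open>The tensor product of Hom-Long dimodules\<close>

lemma dal_tensor_dimod: "dal (tensor_dimod H i j U V) = tmap (dal U) (dal V)"
  by (simp add: tensor_dimod_def)

lemma dact_tensor_dimod: "dact (tensor_dimod H i j U V)
   = tmap (dact U) (dact V) \<circ> mid \<circ> tmap id (tmap (\<alpha>pow (-i-2)) (\<alpha>pow (-j-2)) \<circ> \<Delta>)"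
  by (simp add: tensor_dimod_def fun_eq_iff comp_def)

lemma dco_tensor_dimod: "dco (tensor_dimod H i j U V)
   = tmap id (twisted_mult i j) \<circ> mid \<circ> tmap (dco U) (dco V)"
  by (simp add: tensor_dimod_def fun_eq_iff comp_def)

context
  fixes U :: "('k, 'h, 'u::finite) dimod" and V :: "('k, 'h, 'v::finite) dimod" and i j :: int
  assumes U: "hom_long_dimod H U" and V: "hom_long_dimod H V"
begin

abbreviation "UV \<equiv> tensor_dimod H i j U V"

lemma lin_tensor_dimod [simp]: "lin (dal UV)" "lin (dact UV)" "lin (dco UV)"
  using U V by (simp_all add: dal_tensor_dimod dact_tensor_dimod dco_tensor_dimod)

lemma bij_dal_tensor_dimod: "bij (dal UV)"
  using U V by (simp add: dal_tensor_dimod bij_tmap bij_dal)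

lemma dact_tensor_tens: "dact UV (tens (tens u v) h)
   = tmap (dact U \<circ> (tens u \<circ> \<alpha>pow (-i-2))) (dact V \<circ> (tens v \<circ> \<alpha>pow (-j-2))) (\<Delta> h)"
  using U V by (simp add: dact_tensor_dimod tmap_simps)

lemma dco_tensor_tens: "dco UV (tens u v) = tmap id (twisted_mult i j) (mid (tens (dco U u) (dco V v)))"
  using U V by (simp add: dco_tensor_dimod tmap_tens)

lemma tensor_dact_assoc: "dact UV (tens (dact UV (tens x a)) (\<alpha> b)) = dact UV (tens (dal UV x) (\<mu> (tens a b)))"
proof -
  have "dact UV \<circ> (\<lambda>y. tens y (\<alpha> b)) \<circ> dact UV \<circ> (\<lambda>x. tens x a)
      = dact UV \<circ> (\<lambda>y. tens y (\<mu> (tens a b))) \<circ> dal UV"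
  proof (rule lin_eq_on_tens)
    fix u v
    let ?F = "dact U \<circ> (tens (dal U u) \<circ> \<alpha>pow (-i-2))"
    let ?G = "dact V \<circ> (tens (dal V v) \<circ> \<alpha>pow (-j-2))"
    have "dact UV \<circ> (\<lambda>y. tens y (\<alpha> b)) \<circ> tmap (dact U \<circ> (tens u \<circ> \<alpha>pow (-i-2))) (dact V \<circ> (tens v \<circ> \<alpha>pow (-j-2)))
        = tmap ?F ?G \<circ> tmap \<mu> \<mu> \<circ> mid \<circ> (\<lambda>t. tens t (\<Delta> b))"
    proof (rule lin_eq_on_tens)
      fix x y
      have "dact U (tens (dact U (tens u (\<alpha>pow (-i-2) x))) (\<alpha>pow (-i-2) (\<alpha> c)))
          = dact U (tens (dal U u) (\<alpha>pow (-i-2) (\<mu> (tens x c))))"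
        and "dact V (tens (dact V (tens v (\<alpha>pow (-j-2) y))) (\<alpha>pow (-j-2) (\<alpha> c)))
          = dact V (tens (dal V v) (\<alpha>pow (-j-2) (\<mu> (tens y c))))" for c
        using U V by (simp_all add: alpha_alpha_pow[symmetric] dact_assoc mult_alpha_pow)
      then show "(dact UV \<circ> (\<lambda>y. tens y (\<alpha> b)) \<circ> tmap (dact U \<circ> (tens u \<circ> \<alpha>pow (-i-2))) (dact V \<circ> (tens v \<circ> \<alpha>pow (-j-2)))) (tens x y)
          = (tmap ?F ?G \<circ> tmap \<mu> \<mu> \<circ> mid \<circ> (\<lambda>t. tens t (\<Delta> b))) (tens x y)"
        using U V by (simp add: tmap_simps dact_tensor_tens comult_alpha) (simp add: comp_def)
    qed (use U V in simp_all)
    from fun_cong[OF this, of "\<Delta> a"]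
    show "(dact UV \<circ> (\<lambda>y. tens y (\<alpha> b)) \<circ> dact UV \<circ> (\<lambda>x. tens x a)) (tens u v) =
         (dact UV \<circ> (\<lambda>y. tens y (\<mu> (tens a b))) \<circ> dal UV) (tens u v)"
      using U V by (simp add: tmap_simps dact_tensor_tens dal_tensor_dimod comult_mult)
  qed (use U V in simp_all)
  then show ?thesis by (metis comp_apply)
qed

lemma tensor_dact_one: "dact UV (tens x \<eta>) = dal UV x"
proof -
  have "dact UV \<circ> (\<lambda>x. tens x \<eta>) = dal UV"
    using U V by (intro lin_eq_on_tens) (simp_all add: tmap_simps dact_tensor_tens dal_tensor_dimod dact_one)
  then show ?thesis by (metis comp_apply)
qed

lemma tensor_dco_counit: "(\<lambda>x. \<epsilon> (\<lambda>h. dco UV w (x, h))) = dal UV w"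
proof -
  have "eps_right \<circ> dco UV = dal UV"
  proof (rule lin_eq_on_tens)
    fix u v
    have "eps_right (dco UV (tens u v)) = tmap eps_right eps_right (tens (dco U u) (dco V v))"
      using fun_cong[OF eps_right_twisted_mult[where i = i and j = j], of "tens (dco U u) (dco V v)"] U V
      by (simp add: dco_tensor_dimod tmap_simps)
    also have "\<dots> = tens (dal U u) (dal V v)"
      using U V by (simp add: tmap_tens eps_right_def dco_counit)
    finally show "(eps_right \<circ> dco UV) (tens u v) = dal UV (tens u v)"
      using U V by (simp add: dal_tensor_dimod tmap_tens)
  qed (use U V in simp_all)
  then have "eps_right (dco UV w) = dal UV w" by (metis comp_apply)
  then show ?thesis by (simp add: eps_right_def)
qed

lemma tensor_dal_dact: "dal UV (dact UV (tens x h)) = dact UV (tens (dal UV x) (\<alpha> h))"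
proof -
  have "dal UV \<circ> dact UV \<circ> (\<lambda>x. tens x h) = dact UV \<circ> (\<lambda>y. tens y (\<alpha> h)) \<circ> dal UV"
    using U V
    by (intro lin_eq_on_tens, simp_all add: tmap_simps dact_tensor_tens dal_tensor_dimod comult_alpha)
      (simp add: comp_def dal_dact alpha_alpha_pow)
  then show ?thesis by (metis comp_apply)
qed

lemma tensor_dco_dal: "dco UV (dal UV x) = tmap (dal UV) \<alpha> (dco UV x)"
proof -
  have "dco UV \<circ> dal UV = tmap (dal UV) \<alpha> \<circ> dco UV"
    using U V
    by (intro lin_eq_on_tens)
      (simp_all add: tmap_simps dco_tensor_dimod dal_tensor_dimod dco_dal mid_tens_tmap twisted_mult_alpha)
  then show ?thesis by (metis comp_apply)
qed

lemma tensor_dco_coassoc: "tmap (dal UV) \<Delta> (dco UV w) = reassoc (tmap (dco UV) \<alpha> (dco UV w))"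
proof -
  let ?Psi = "tmap id (tmap (twisted_mult i j) (twisted_mult i j) \<circ> mid) \<circ> mid"
  have twisted_mult_reassoc:
    "reassoc \<circ> (\<lambda>Y::('u \<times> 'v) \<times> 'h \<Rightarrow> 'k. tens Y (\<alpha> (twisted_mult i j (tens x y)))) \<circ> tmap id (twisted_mult i j) \<circ> mid
     = ?Psi \<circ> tmap (reassoc \<circ> (\<lambda>S::'u \<times> 'h \<Rightarrow> 'k. tens S (\<alpha> x))) (reassoc \<circ> (\<lambda>T::'v \<times> 'h \<Rightarrow> 'k. tens T (\<alpha> y)))"
    for x y
    by (rule lin_eq_on_tens4) (simp_all add: tmap_simps alpha_mult alpha_alpha_pow)
  have left: "tmap (tmap (dal U) (dal V)) \<Delta> \<circ> tmap id (twisted_mult i j) \<circ> mid = ?Psi \<circ> tmap (tmap (dal U) \<Delta>) (tmap (dal V) \<Delta>)"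
    using U V by (intro lin_eq_on_tens4) (simp_all add: tmap_simps comult_mult comult_alpha_pow mid_tens_tmap)
  have right: "reassoc \<circ> tmap (dco UV) \<alpha> \<circ> tmap id (twisted_mult i j) \<circ> mid
     = ?Psi \<circ> tmap (reassoc \<circ> tmap (dco U) \<alpha>) (reassoc \<circ> tmap (dco V) \<alpha>)"
  proof (rule lin_eq_on_tens4)
    fix u x v y
    have "(reassoc \<circ> tmap (dco UV) \<alpha> \<circ> tmap id (twisted_mult i j) \<circ> mid) (tens (tens u x) (tens v y))
      = (reassoc \<circ> (\<lambda>Y::('u \<times> 'v) \<times> 'h \<Rightarrow> 'k. tens Y (\<alpha> (twisted_mult i j (tens x y)))) \<circ> tmap id (twisted_mult i j) \<circ> mid)
          (tens (dco U u) (dco V v))"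
      using U V by (simp add: tmap_simps dco_tensor_tens)
    also have "\<dots> = (?Psi \<circ> tmap (reassoc \<circ> tmap (dco U) \<alpha>) (reassoc \<circ> tmap (dco V) \<alpha>))
        (tens (tens u x) (tens v y))"
      using U V by (simp only: twisted_mult_reassoc) (simp add: tmap_simps)
    finally show "(reassoc \<circ> tmap (dco UV) \<alpha> \<circ> tmap id (twisted_mult i j) \<circ> mid) (tens (tens u x) (tens v y))
      = (?Psi \<circ> tmap (reassoc \<circ> tmap (dco U) \<alpha>) (reassoc \<circ> tmap (dco V) \<alpha>)) (tens (tens u x) (tens v y))" .
  qed (use U V in simp_all)
  have "tmap (dal UV) \<Delta> \<circ> dco UV = reassoc \<circ> tmap (dco UV) \<alpha> \<circ> dco UV"
  proof (rule lin_eq_on_tens)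
    fix u v
    have "(tmap (dal UV) \<Delta> \<circ> dco UV) (tens u v)
        = ?Psi (tmap (tmap (dal U) \<Delta>) (tmap (dal V) \<Delta>) (tens (dco U u) (dco V v)))"
      using fun_cong[OF left] by (simp add: dco_tensor_tens dal_tensor_dimod)
    also have "\<dots> = ?Psi (tmap (reassoc \<circ> tmap (dco U) \<alpha>) (reassoc \<circ> tmap (dco V) \<alpha>) (tens (dco U u) (dco V v)))"
      using U V by (simp add: tmap_tens dco_coassoc)
    also have "\<dots> = (reassoc \<circ> tmap (dco UV) \<alpha> \<circ> dco UV) (tens u v)"
      using fun_cong[OF right] by (simp add: dco_tensor_tens)
    finally show "(tmap (dal UV) \<Delta> \<circ> dco UV) (tens u v) = (reassoc \<circ> tmap (dco UV) \<alpha> \<circ> dco UV) (tens u v)" .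
  qed (use U V in simp_all)
  then show ?thesis by (metis comp_apply)
qed

lemma tensor_dact_swap23:
  "tmap (dact UV) \<alpha> (swap23 (tens Y c))
   = tmap (tmap (dact U) (dact V) \<circ> mid) \<alpha> (swap23 (tens Y (tmap (\<alpha>pow (-i-2)) (\<alpha>pow (-j-2)) (\<Delta> c))))"
proof -
  have "tmap (dact UV) \<alpha> \<circ> swap23 \<circ> (\<lambda>Y. tens Y c)
      = tmap (tmap (dact U) (dact V) \<circ> mid) \<alpha> \<circ> swap23 \<circ> (\<lambda>Y. tens Y (tmap (\<alpha>pow (-i-2)) (\<alpha>pow (-j-2)) (\<Delta> c)))"
    using U V by (intro lin_eq_on_tens) (simp_all add: tmap_simps swap23_tens dact_tensor_dimod)
  then show ?thesis by (metis comp_apply)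
qed

lemma tensor_dco_dact: "dco UV (dact UV (tens x h)) = tmap (\<lambda>y. dact UV (tens y (\<alpha> h))) \<alpha> (dco UV x)"
proof -
  have twisted_mult_swap23:
    "tmap id (twisted_mult i j) \<circ> mid \<circ> tmap (tmap (dact U) \<alpha> \<circ> swap23 \<circ> (\<lambda>S::'u \<times> 'h \<Rightarrow> 'k. tens S c1))
                                (tmap (dact V) \<alpha> \<circ> swap23 \<circ> (\<lambda>T::'v \<times> 'h \<Rightarrow> 'k. tens T c2))
     = tmap (tmap (dact U) (dact V) \<circ> mid) \<alpha> \<circ> swap23 \<circ> (\<lambda>Y. tens Y (tens c1 c2)) \<circ> tmap id (twisted_mult i j) \<circ> mid"
    for c1 c2
    using U V by (intro lin_eq_on_tens4) (simp_all add: tmap_simps swap23_tens alpha_mult alpha_alpha_pow)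
  have "dco UV \<circ> dact UV \<circ> (\<lambda>x. tens x h) = tmap (dact UV) \<alpha> \<circ> swap23 \<circ> (\<lambda>Y. tens Y (\<alpha> h)) \<circ> dco UV"
  proof (rule lin_eq_on_tens)
    fix u v
    let ?S = "dco U u" and ?T = "dco V v"
    let ?Fu = "dact U \<circ> (tens u \<circ> \<alpha>pow (-i-2))" and ?Gv = "dact V \<circ> (tens v \<circ> \<alpha>pow (-j-2))"
    let ?Lam = "tmap id (twisted_mult i j) \<circ> mid \<circ> tmap (tmap (dact U) \<alpha> \<circ> swap23 \<circ> tens ?S \<circ> \<alpha> \<circ> \<alpha>pow (-i-2))
                                             (tmap (dact V) \<alpha> \<circ> swap23 \<circ> tens ?T \<circ> \<alpha> \<circ> \<alpha>pow (-j-2))"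
    let ?Om = "tmap (tmap (dact U) (dact V) \<circ> mid) \<alpha> \<circ> swap23 \<circ> (\<lambda>z. tens (tmap id (twisted_mult i j) (mid (tens ?S ?T))) z)
               \<circ> tmap (\<alpha>pow (-i-2) \<circ> \<alpha>) (\<alpha>pow (-j-2) \<circ> \<alpha>)"
    have A: "dco UV \<circ> tmap ?Fu ?Gv = ?Lam"
      using U V by (intro lin_eq_on_tens) (simp_all add: tmap_simps dco_tensor_tens dco_dact_swap23)
    have B: "?Lam = ?Om"
    proof (rule lin_eq_on_tens)
      fix s t
      have "?Lam (tens s t) = (tmap id (twisted_mult i j) \<circ> mid \<circ> tmap (tmap (dact U) \<alpha> \<circ> swap23 \<circ> (\<lambda>S::'u \<times> 'h \<Rightarrow> 'k. tens S (\<alpha>pow (-i-2) (\<alpha> s))))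
            (tmap (dact V) \<alpha> \<circ> swap23 \<circ> (\<lambda>T::'v \<times> 'h \<Rightarrow> 'k. tens T (\<alpha>pow (-j-2) (\<alpha> t))))) (tens ?S ?T)"
        using U V by (simp add: tmap_simps alpha_alpha_pow)
      also have "\<dots> = ?Om (tens s t)"
        using U V by (simp only: twisted_mult_swap23) (simp add: tmap_simps)
      finally show "?Lam (tens s t) = ?Om (tens s t)" .
    qed (use U V in simp_all)
    have "(dco UV \<circ> dact UV \<circ> (\<lambda>x. tens x h)) (tens u v) = (dco UV \<circ> tmap ?Fu ?Gv) (\<Delta> h)"
      by (simp add: dact_tensor_tens)
    also have "\<dots> = ?Om (\<Delta> h)" using A B by simp
    also have "\<dots> = (tmap (dact UV) \<alpha> \<circ> swap23 \<circ> (\<lambda>Y. tens Y (\<alpha> h)) \<circ> dco UV) (tens u v)"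
      using U V by (simp add: tensor_dact_swap23 dco_tensor_tens comult_alpha tmap_comp)
    finally show "(dco UV \<circ> dact UV \<circ> (\<lambda>x. tens x h)) (tens u v)
      = (tmap (dact UV) \<alpha> \<circ> swap23 \<circ> (\<lambda>Y. tens Y (\<alpha> h)) \<circ> dco UV) (tens u v)" .
  qed (use U V in simp_all)
  then show ?thesis by (simp add: fun_eq_iff tmap_slot_swap23)
qed

lemma hom_long_dimod_tensor: "hom_long_dimod H UV"
  using U V bij_dal_tensor_dimod tensor_dact_assoc tensor_dact_one tensor_dco_coassoc tensor_dco_counit
    tensor_dal_dact tensor_dco_dal tensor_dco_dact
  unfolding hom_long_dimod_def Let_def by simp

end

section \<open>The unit object and morphisms\<close>

lemma dact_unit_tens: "dact (unit_dimod H) (tens u a) = (\<lambda>_. u () * \<epsilon> a)"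
  by (simp add: unit_dimod_def tens_def counit_scale)

lemma dal_unit_dimod: "dal (unit_dimod H) = id"
  and dco_unit_dimod: "dco (unit_dimod H) = (\<lambda>x. tens x \<eta>)"
  by (simp_all add: unit_dimod_def)

lemma hom_long_dimod_unit: "hom_long_dimod H (unit_dimod H)"
proof -
  have "lin (dact (unit_dimod H))"
    by (simp add: unit_dimod_def lin_def counit_add counit_scale fun_eq_iff)
  moreover have "lin (\<lambda>x::unit \<Rightarrow> 'k. dact (unit_dimod H) (tens x c))" for c
    by (simp add: lin_def dact_unit_tens fun_eq_iff algebra_simps)
  ultimately show ?thesis
    unfolding hom_long_dimod_def Let_def dal_unit_dimod dco_unit_dimod
    by (simp add: dact_unit_tens counit_mult tmap_tens reassoc_tens)
      (simp add: tens_def counit_scale fun_eq_iff)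
qed

lemma ld_mor_tmap:
  fixes U :: "('k, 'h, 'u1::finite) dimod" and U' :: "('k, 'h, 'u2::finite) dimod"
    and V :: "('k, 'h, 'v1::finite) dimod" and V' :: "('k, 'h, 'v2::finite) dimod"
  assumes U: "hom_long_dimod H U" and U': "hom_long_dimod H U'"
    and V: "hom_long_dimod H V" and V': "hom_long_dimod H V'"
    and f: "ld_mor H U U' f" and g: "ld_mor H V V' g"
  shows "ld_mor H (tensor_dimod H i j U V) (tensor_dimod H i j U' V') (tmap f g)"
proof -
  note lin_fg = ld_mor_lin[OF f] ld_mor_lin[OF g]
  have "f \<circ> dal U = dal U' \<circ> f" "g \<circ> dal V = dal V' \<circ> g"
    using ld_mor_dal[OF f] ld_mor_dal[OF g] by (simp_all add: fun_eq_iff)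
  then have "tmap f g (dal (tensor_dimod H i j U V) w) = dal (tensor_dimod H i j U' V') (tmap f g w)" for w
    using U U' V V' lin_fg by (simp add: dal_tensor_dimod tmap_comp)
  moreover have "tmap f g \<circ> dact (tensor_dimod H i j U V) \<circ> (\<lambda>w. tens w h)
      = dact (tensor_dimod H i j U' V') \<circ> (\<lambda>w. tens w h) \<circ> tmap f g" for h
    using U U' V V' lin_fg
    by (intro lin_eq_on_tens, simp_all add: tmap_simps dact_tensor_tens)
      (simp add: comp_def ld_mor_dact[OF f] ld_mor_dact[OF g])
  moreover have "dco (tensor_dimod H i j U' V') \<circ> tmap f g = tmap (tmap f g) id \<circ> dco (tensor_dimod H i j U V)"
    using U U' V V' lin_fg
    by (intro lin_eq_on_tens)
      (simp_all add: tmap_simps dco_tensor_dimod ld_mor_dco[OF f] ld_mor_dco[OF g] mid_tens_tmap tmap_id(1))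
  ultimately show ?thesis
    unfolding ld_mor_def using lin_fg by (simp add: fun_eq_iff)
qed

section \<open>The associativity and unit constraints\<close>

lemma amap_eq: "amap i j aU aW = reassoc \<circ> tmap (tmap (zpow aU (i + 1)) id) (zpow aW (-j-1))"
  by (simp add: amap_def fun_eq_iff)

context
  fixes U :: "('k, 'h, 'u::finite) dimod" and V :: "('k, 'h, 'v::finite) dimod"
    and W :: "('k, 'h, 'w::finite) dimod" and i j :: int
  assumes U: "hom_long_dimod H U" and V: "hom_long_dimod H V" and W: "hom_long_dimod H W"
begin

abbreviation "a_UVW \<equiv> amap i j (dal U) (dal W)"
abbreviation "UV_W \<equiv> tensor_dimod H i j (tensor_dimod H i j U V) W"
abbreviation "U_VW \<equiv> tensor_dimod H i j U (tensor_dimod H i j V W)"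

lemma lin_assoc [simp]: "lin a_UVW"
  using U W by (simp add: amap_eq)

lemma bij_assoc: "bij (a_UVW :: (('u \<times> 'v) \<times> 'w \<Rightarrow> 'k) \<Rightarrow> _)"
proof -
  have "bij (tmap (tmap (zpow (dal U) (i + 1)) id) (zpow (dal W) (-j-1)) :: ((('u \<times> 'v) \<times> 'w) \<Rightarrow> 'k) \<Rightarrow> _)"
    using U W by (intro bij_tmap lin_tmap) (simp_all add: bij_zpow bij_dal)
  from bij_comp[OF this bij_reassoc] show ?thesis by (simp add: amap_eq)
qed

lemma assoc_dal: "a_UVW (dal UV_W z) = dal U_VW (a_UVW z)"
proof -
  have "a_UVW \<circ> dal UV_W = dal U_VW \<circ> a_UVW"
    using U V W
    by (intro lin_eq_on_tens3) (simp_all add: tmap_simps amap_eq dal_tensor_dimod zpow_self_commute bij_dal)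
  then show ?thesis by (metis comp_apply)
qed

lemma assoc_dact: "a_UVW (dact UV_W (tens z h)) = dact U_VW (tens (a_UVW z) h)"
proof -
  let ?p = "-i-2" and ?q = "-j-2"
  let ?QU = "zpow (dal U) (i + 1)" and ?QW = "zpow (dal W) (-j-1)"
  have UV: "hom_long_dimod H (tensor_dimod H i j U V)" and VW: "hom_long_dimod H (tensor_dimod H i j V W)"
    using U V W by (simp_all add: hom_long_dimod_tensor)
  have "a_UVW \<circ> dact UV_W \<circ> (\<lambda>z. tens z h) = dact U_VW \<circ> (\<lambda>z. tens z h) \<circ> a_UVW"
  proof (rule lin_eq_on_tens3)
    fix u v w
    let ?Phi1 = "reassoc \<circ> tmap (tmap (?QU \<circ> dact U \<circ> tens u \<circ> \<alpha>pow ?p \<circ> \<alpha>pow ?p) (dact V \<circ> tens v \<circ> \<alpha>pow ?q \<circ> \<alpha>pow ?p))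
                                 (?QW \<circ> dact W \<circ> tens w \<circ> \<alpha>pow ?q)"
    let ?Phi2 = "tmap (dact U \<circ> tens (?QU u) \<circ> \<alpha>pow ?p)
                   (tmap (dact V \<circ> tens v \<circ> \<alpha>pow ?p \<circ> \<alpha>pow ?q) (dact W \<circ> tens (?QW w) \<circ> \<alpha>pow ?q \<circ> \<alpha>pow ?q))"
    have left: "a_UVW \<circ> tmap (dact (tensor_dimod H i j U V) \<circ> (tens (tens u v) \<circ> \<alpha>pow ?p)) (dact W \<circ> (tens w \<circ> \<alpha>pow ?q))
         = ?Phi1 \<circ> tmap \<Delta> id"
      using U V W UV by (intro lin_eq_on_tens) (simp_all add: tmap_simps amap_eq dact_tensor_tens comult_alpha_pow)
    have right: "tmap (dact U \<circ> (tens (?QU u) \<circ> \<alpha>pow ?p)) (dact (tensor_dimod H i j V W) \<circ> (tens (tens v (?QW w)) \<circ> \<alpha>pow ?q))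
         = ?Phi2 \<circ> tmap id \<Delta>"
      using U V W VW by (intro lin_eq_on_tens) (simp_all add: tmap_simps dact_tensor_tens comult_alpha_pow)
    have middle: "?Phi1 = ?Phi2 \<circ> reassoc \<circ> tmap (tmap (\<alpha>pow (-1)) id) \<alpha>"
      using U V W
      \<comment> \<open>what remains is arithmetic on the exponents of \<open>\<alpha>\<close>\<close>
      by (intro lin_eq_on_tens3, simp_all add: tmap_simps zpow_dal_dact alpha_as_pow)
        (smt (verit))
    have "(a_UVW \<circ> dact UV_W \<circ> (\<lambda>z. tens z h)) (tens (tens u v) w) = ?Phi1 (tmap \<Delta> id (\<Delta> h))"
      using fun_cong[OF left, of "\<Delta> h"] U V W UV by (simp add: dact_tensor_tens)
    also have "\<dots> = ?Phi2 (tmap id \<Delta> (\<Delta> h))"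
      using fun_cong[OF middle, of "tmap \<Delta> id (\<Delta> h)"] by (simp add: comult_coassoc_id_left)
    also have "\<dots> = (dact U_VW \<circ> (\<lambda>z. tens z h) \<circ> a_UVW) (tens (tens u v) w)"
      using fun_cong[OF right, of "\<Delta> h"] U V W VW by (simp add: dact_tensor_tens amap_eq tmap_simps)
    finally show "(a_UVW \<circ> dact UV_W \<circ> (\<lambda>z. tens z h)) (tens (tens u v) w)
      = (dact U_VW \<circ> (\<lambda>z. tens z h) \<circ> a_UVW) (tens (tens u v) w)" .
  qed (use U V W UV VW in simp_all)
  then show ?thesis by (metis comp_apply)
qed

lemma assoc_dco: "dco U_VW (a_UVW z) = tmap a_UVW id (dco UV_W z)"
proof -
  let ?QU = "zpow (dal U) (i + 1)" and ?QW = "zpow (dal W) (-j-1)"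
  let ?LF = "tmap id (twisted_mult i j) \<circ> mid \<circ> tmap (tmap ?QU (\<alpha>pow (i + 1)))
               (tmap (id :: ('v \<times> 'w \<Rightarrow> 'k) \<Rightarrow> _) (twisted_mult i j) \<circ> mid \<circ> tmap (id :: ('v \<times> 'h \<Rightarrow> 'k) \<Rightarrow> _) (tmap ?QW (\<alpha>pow (-j-1))))
             \<circ> reassoc"
  let ?RF = "tmap a_UVW id \<circ> tmap id (twisted_mult i j) \<circ> mid \<circ> tmap (tmap id (twisted_mult i j) \<circ> mid) id"
  have UV: "hom_long_dimod H (tensor_dimod H i j U V)" and VW: "hom_long_dimod H (tensor_dimod H i j V W)"
    using U V W by (simp_all add: hom_long_dimod_tensor)
  have coefficients: "?LF = ?RF"
  proof (rule lin_eq_on_tens6)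
    fix u x v y w z
    show "?LF (tens (tens (tens u x) (tens v y)) (tens w z)) = ?RF (tens (tens (tens u x) (tens v y)) (tens w z))"
      using U W mult_hom_assoc_pow[of "i + i" x "i + j" y "j - 1" z]
      by (simp add: tmap_simps amap_eq mult_alpha_pow[symmetric] alpha_as_pow add_ac)
  qed (use U W in simp_all)
  have "dco U_VW \<circ> a_UVW = tmap a_UVW id \<circ> dco UV_W"
  proof (rule lin_eq_on_tens3)
    fix u v w
    have "(dco U_VW \<circ> a_UVW) (tens (tens u v) w) = ?LF (tens (tens (dco U u) (dco V v)) (dco W w))"
      using U V W VW by (simp add: tmap_simps amap_eq dco_tensor_tens dco_zpow_dal)
    also have "\<dots> = ?RF (tens (tens (dco U u) (dco V v)) (dco W w))"
      using coefficients by simp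
    also have "\<dots> = (tmap a_UVW id \<circ> dco UV_W) (tens (tens u v) w)"
      using U V W UV by (simp add: tmap_simps dco_tensor_tens)
    finally show "(dco U_VW \<circ> a_UVW) (tens (tens u v) w) = (tmap a_UVW id \<circ> dco UV_W) (tens (tens u v) w)" .
  qed (use U V W UV VW in simp_all)
  then show ?thesis by (metis comp_apply)
qed

lemma ld_mor_assoc: "ld_mor H UV_W U_VW a_UVW"
  unfolding ld_mor_def using assoc_dal assoc_dact assoc_dco by simp

end

lemma lmap_eq: "lmap j aX = zpow aX (j + 1) \<circ> drop_unit_left"
  and rmap_eq: "rmap i aX = zpow aX (i + 1) \<circ> drop_unit_right"
  by (simp_all add: fun_eq_iff lmap_def rmap_def drop_unit_left_def drop_unit_right_def)

lemma drop_unit_tmap_dact_unit: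
  fixes G :: "('h \<Rightarrow> 'k) \<Rightarrow> ('x \<Rightarrow> 'k)"
  assumes "lin G"
  shows "drop_unit_left (tmap (dact (unit_dimod H) \<circ> (tens (\<lambda>_. 1) \<circ> \<alpha>pow n)) G w) = G (eps_left w)"
    and "drop_unit_right (tmap G (dact (unit_dimod H) \<circ> (tens (\<lambda>_. 1) \<circ> \<alpha>pow n)) w') = G (eps_right w')"
proof -
  have lin_unit_action: "lin (dact (unit_dimod H) \<circ> (tens (\<lambda>_. 1) \<circ> \<alpha>pow n))"
    using hom_long_dimod_unit by simp
  have "drop_unit_left \<circ> tmap (dact (unit_dimod H) \<circ> (tens (\<lambda>_. 1) \<circ> \<alpha>pow n)) G = G \<circ> eps_left"
    using assms lin_unit_action
    by (intro lin_eq_on_tens)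
      (simp_all add: tmap_tens dact_unit_tens eps_left_tens drop_unit_tens lin_scale)
  then show "drop_unit_left (tmap (dact (unit_dimod H) \<circ> (tens (\<lambda>_. 1) \<circ> \<alpha>pow n)) G w) = G (eps_left w)"
    by (metis comp_apply)
  have "drop_unit_right \<circ> tmap G (dact (unit_dimod H) \<circ> (tens (\<lambda>_. 1) \<circ> \<alpha>pow n)) = G \<circ> eps_right"
    using assms lin_unit_action
    by (intro lin_eq_on_tens)
      (simp_all add: tmap_tens dact_unit_tens eps_right_tens drop_unit_tens lin_scale)
  then show "drop_unit_right (tmap G (dact (unit_dimod H) \<circ> (tens (\<lambda>_. 1) \<circ> \<alpha>pow n)) w') = G (eps_right w')"
    by (metis comp_apply)
qed

context
  fixes X :: "('k, 'h, 'x::finite) dimod" and i j :: int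
  assumes X: "hom_long_dimod H X"
begin

abbreviation "kX \<equiv> tensor_dimod H i j (unit_dimod H) X"
abbreviation "Xk \<equiv> tensor_dimod H i j X (unit_dimod H)"
abbreviation "l_X \<equiv> lmap j (dal X)"
abbreviation "r_X \<equiv> rmap i (dal X)"

lemma lin_unitors [simp]: "lin l_X" "lin r_X"
  using X by (simp_all add: lmap_eq rmap_eq)

lemma bij_unitors: "bij l_X" "bij r_X"
  using bij_comp[OF bij_drop_unit(1) bij_zpow[OF bij_dal[OF X]]]
    bij_comp[OF bij_drop_unit(2) bij_zpow[OF bij_dal[OF X]]]
  by (simp_all add: lmap_eq rmap_eq)

lemma unitors_dal: "l_X (dal kX w) = dal X (l_X w)" "r_X (dal Xk w') = dal X (r_X w')"
proof -
  have "l_X \<circ> dal kX = dal X \<circ> l_X" "r_X \<circ> dal Xk = dal X \<circ> r_X"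
    using X hom_long_dimod_unit
    by (intro lin_eq_on_unit_tens; simp add: tmap_tens lmap_eq rmap_eq dal_tensor_dimod dal_unit_dimod
          drop_unit_tens zpow_self_commute bij_dal)+
  then show "l_X (dal kX w) = dal X (l_X w)" "r_X (dal Xk w') = dal X (r_X w')"
    by (metis comp_apply)+
qed

lemma unitors_dact: "l_X (dact kX (tens w h)) = dact X (tens (l_X w) h)"
  "r_X (dact Xk (tens w' h)) = dact X (tens (r_X w') h)"
proof -
  have "l_X \<circ> dact kX \<circ> (\<lambda>w. tens w h) = dact X \<circ> (\<lambda>w. tens w h) \<circ> l_X"
  proof (rule lin_eq_on_unit_tens(1))
    fix x
    have "(l_X \<circ> dact kX \<circ> (\<lambda>w. tens w h)) (tens (\<lambda>_. 1) x)
        = zpow (dal X) (j + 1) (dact X (tens x (\<alpha>pow (-j-2) (eps_left (\<Delta> h)))))"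
      using X hom_long_dimod_unit by (simp add: dact_tensor_tens lmap_eq drop_unit_tmap_dact_unit)
    also have "\<dots> = (dact X \<circ> (\<lambda>w. tens w h) \<circ> l_X) (tens (\<lambda>_. 1) x)"
      using X by (simp add: eps_left_comult zpow_dal_dact alpha_as_pow lmap_eq drop_unit_tens)
    finally show "(l_X \<circ> dact kX \<circ> (\<lambda>w. tens w h)) (tens (\<lambda>_. 1) x)
      = (dact X \<circ> (\<lambda>w. tens w h) \<circ> l_X) (tens (\<lambda>_. 1) x)" .
  qed (use X hom_long_dimod_unit in simp_all)
  then show "l_X (dact kX (tens w h)) = dact X (tens (l_X w) h)" by (metis comp_apply)
  have "r_X \<circ> dact Xk \<circ> (\<lambda>w. tens w h) = dact X \<circ> (\<lambda>w. tens w h) \<circ> r_X"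
  proof (rule lin_eq_on_unit_tens(2))
    fix x
    have "(r_X \<circ> dact Xk \<circ> (\<lambda>w. tens w h)) (tens x (\<lambda>_. 1))
        = zpow (dal X) (i + 1) (dact X (tens x (\<alpha>pow (-i-2) (eps_right (\<Delta> h)))))"
      using X hom_long_dimod_unit by (simp add: dact_tensor_tens rmap_eq drop_unit_tmap_dact_unit)
    also have "\<dots> = (dact X \<circ> (\<lambda>w. tens w h) \<circ> r_X) (tens x (\<lambda>_. 1))"
      using X by (simp add: eps_right_comult zpow_dal_dact alpha_as_pow rmap_eq drop_unit_tens)
    finally show "(r_X \<circ> dact Xk \<circ> (\<lambda>w. tens w h)) (tens x (\<lambda>_. 1))
      = (dact X \<circ> (\<lambda>w. tens w h) \<circ> r_X) (tens x (\<lambda>_. 1))" .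
  qed (use X hom_long_dimod_unit in simp_all)
  then show "r_X (dact Xk (tens w' h)) = dact X (tens (r_X w') h)" by (metis comp_apply)
qed

lemma unitors_dco: "dco X (l_X w) = tmap l_X id (dco kX w)" "dco X (r_X w') = tmap r_X id (dco Xk w')"
proof -
  have "\<mu> \<circ> (tmap (\<alpha>pow i) (\<alpha>pow j) \<circ> tens \<eta>) = \<alpha>pow (j + 1)"
    "\<mu> \<circ> (tmap (\<alpha>pow i) (\<alpha>pow j) \<circ> (\<lambda>s. tens s \<eta>)) = \<alpha>pow (i + 1)"
    by (simp_all add: fun_eq_iff tmap_tens mult_one_left mult_one_right alpha_as_pow add.commute)
  moreover have "l_X \<circ> tens (\<lambda>_. 1) = zpow (dal X) (j + 1)" "r_X \<circ> (\<lambda>s. tens s (\<lambda>_. 1)) = zpow (dal X) (i + 1)"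
    by (simp_all add: fun_eq_iff lmap_eq rmap_eq drop_unit_tens)
  ultimately have "dco X \<circ> l_X = tmap l_X id \<circ> dco kX" "dco X \<circ> r_X = tmap r_X id \<circ> dco Xk"
    using X hom_long_dimod_unit
    by (intro lin_eq_on_unit_tens; simp add: dco_tensor_tens dco_unit_dimod tmap_simps mid_tens_right
          lmap_eq rmap_eq drop_unit_tens dco_zpow_dal)+
  then show "dco X (l_X w) = tmap l_X id (dco kX w)" "dco X (r_X w') = tmap r_X id (dco Xk w')"
    by (metis comp_apply)+
qed

lemma ld_mor_unitors: "ld_mor H kX X l_X" "ld_mor H Xk X r_X"
  unfolding ld_mor_def using unitors_dal unitors_dact unitors_dco by simp_all

end

lemma ld_mor_zpow_dal:
  assumes "ld_mor H U U' f" "hom_long_dimod H U" "hom_long_dimod H U'"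
  shows "f (zpow (dal U) n u) = zpow (dal U') n (f u)"
  by (rule zpow_commute[OF bij_dal[OF assms(2)] bij_dal[OF assms(3)]]) (rule ld_mor_dal[OF assms(1)])

lemma assoc_natural:
  fixes U :: "('k, 'h, 't1::finite) dimod" and U' :: "('k, 'h, 't2::finite) dimod"
    and V :: "('k, 'h, 't3::finite) dimod" and V' :: "('k, 'h, 't4::finite) dimod"
    and W :: "('k, 'h, 't5::finite) dimod" and W' :: "('k, 'h, 't6::finite) dimod"
  assumes U: "hom_long_dimod H U" and U': "hom_long_dimod H U'"
    and W: "hom_long_dimod H W" and W': "hom_long_dimod H W'"
    and f: "ld_mor H U U' f" and g: "ld_mor H V V' g" and h: "ld_mor H W W' h"
  shows "amap i j (dal U') (dal W') \<circ> tmap (tmap f g) h = tmap f (tmap g h) \<circ> amap i j (dal U) (dal W)"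
  using U U' W W' ld_mor_lin[OF f] ld_mor_lin[OF g] ld_mor_lin[OF h]
  by (intro lin_eq_on_tens3)
    (simp_all add: amap_eq tmap_simps ld_mor_zpow_dal[OF f U U'] ld_mor_zpow_dal[OF h W W'])

lemma unitors_natural:
  fixes X :: "('k, 'h, 'x1::finite) dimod" and X' :: "('k, 'h, 'x2::finite) dimod"
  assumes X: "hom_long_dimod H X" and X': "hom_long_dimod H X'" and f: "ld_mor H X X' f"
  shows "f \<circ> lmap j (dal X) = lmap j (dal X') \<circ> tmap id f"
    and "f \<circ> rmap i (dal X) = rmap i (dal X') \<circ> tmap f id"
  using X X' ld_mor_lin[OF f]
  by (intro lin_eq_on_unit_tens;
      simp add: lmap_eq rmap_eq tmap_tens drop_unit_tens ld_mor_zpow_dal[OF f X X'])+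

lemma pentagon:
  fixes U :: "('k, 'h, 'e1::finite) dimod" and V :: "('k, 'h, 'e2::finite) dimod"
    and W :: "('k, 'h, 'e3::finite) dimod" and X :: "('k, 'h, 'e4::finite) dimod"
  assumes "hom_long_dimod H U" "hom_long_dimod H V" "hom_long_dimod H W" "hom_long_dimod H X"
  shows "tmap id (amap i j (dal V) (dal X)) \<circ> amap i j (dal U) (dal X) \<circ> tmap (amap i j (dal U) (dal W)) id
         = amap i j (dal U) (dal (tensor_dimod H i j W X))
           \<circ> (amap i j (dal (tensor_dimod H i j U V)) (dal X) :: ((('e1 \<times> 'e2) \<times> 'e3) \<times> 'e4 \<Rightarrow> 'k) \<Rightarrow> _)"
  using assms
  by (intro lin_eq_on_tens4_left)
    (simp_all add: amap_eq tmap_simps bij_dal dal_tensor_dimod zpow_tmap zpow_add)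

lemma triangle:
  fixes U :: "('k, 'h, 'g1::finite) dimod" and V :: "('k, 'h, 'g2::finite) dimod"
  assumes "hom_long_dimod H U" "hom_long_dimod H V"
  shows "tmap id (lmap j (dal V)) \<circ> amap i j (dal U) (dal V) = tmap (rmap i (dal U)) id"
  using assms
  by (intro lin_eq_on_tens3)
    (simp_all add: amap_eq lmap_eq rmap_eq tmap_simps drop_unit_tens lin_scale tens_scale zpow_zpow bij_dal)

end

theorem proposition6p2:
  fixes H :: "('k::field_char_0, 'h::finite) hbialg" and i j :: int
  assumes "hom_bialgebra H"
  shows
   "\<comment> \<open>objects: tensor product of Hom-Long dimodules is a Hom-Long dimodule\<close>
    (\<forall>(U::('k, 'h, 'u::finite) dimod) (V::('k, 'h, 'v::finite) dimod).
        hom_long_dimod H U \<and> hom_long_dimod H V \<longrightarrow> hom_long_dimod H (tensor_dimod H i j U V))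
    \<comment> \<open>unit object\<close>
  \<and> hom_long_dimod H (unit_dimod H)
    \<comment> \<open>tensor product of morphisms is a morphism\<close>
  \<and> (\<forall>(U::('k, 'h, 'u1::finite) dimod) (U'::('k, 'h, 'u2::finite) dimod)
       (V::('k, 'h, 'v1::finite) dimod) (V'::('k, 'h, 'v2::finite) dimod) f g.
        hom_long_dimod H U \<and> hom_long_dimod H U' \<and> hom_long_dimod H V \<and> hom_long_dimod H V'
        \<and> ld_mor H U U' f \<and> ld_mor H V V' g
        \<longrightarrow> ld_mor H (tensor_dimod H i j U V) (tensor_dimod H i j U' V') (tmap f g))
    \<comment> \<open>functoriality of the tensor product\<close>
  \<and> (tmap (id :: ('a1::finite \<Rightarrow> 'k) \<Rightarrow> _) (id :: ('b1::finite \<Rightarrow> 'k) \<Rightarrow> _) = id)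
  \<and> (\<forall>(U::('k, 'h, 'p1::finite) dimod) (U'::('k, 'h, 'p2::finite) dimod) (U''::('k, 'h, 'p3::finite) dimod)
       (V::('k, 'h, 'q1::finite) dimod) (V'::('k, 'h, 'q2::finite) dimod) (V''::('k, 'h, 'q3::finite) dimod)
       f f' g g'.
        hom_long_dimod H U \<and> hom_long_dimod H U' \<and> hom_long_dimod H U''
        \<and> hom_long_dimod H V \<and> hom_long_dimod H V' \<and> hom_long_dimod H V''
        \<and> ld_mor H U U' f \<and> ld_mor H U' U'' f' \<and> ld_mor H V V' g \<and> ld_mor H V' V'' g'
        \<longrightarrow> tmap (f' \<circ> f) (g' \<circ> g) = tmap f' g' \<circ> tmap f g)
    \<comment> \<open>associativity constraint is an isomorphism in the category of Hom-Long dimodules\<close>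
  \<and> (\<forall>(U::('k, 'h, 'r1::finite) dimod) (V::('k, 'h, 'r2::finite) dimod) (W::('k, 'h, 'r3::finite) dimod).
        hom_long_dimod H U \<and> hom_long_dimod H V \<and> hom_long_dimod H W \<longrightarrow>
          ld_mor H (tensor_dimod H i j (tensor_dimod H i j U V) W) (tensor_dimod H i j U (tensor_dimod H i j V W))
                 (amap i j (dal U) (dal W))
        \<and> bij (amap i j (dal U) (dal W) :: (('r1 \<times> 'r2) \<times> 'r3 \<Rightarrow> 'k) \<Rightarrow> _)
        \<and> ld_mor H (tensor_dimod H i j U (tensor_dimod H i j V W)) (tensor_dimod H i j (tensor_dimod H i j U V) W)
                 (inv (amap i j (dal U) (dal W))))
    \<comment> \<open>left and right unit constraints are isomorphisms\<close>
  \<and> (\<forall>(X::('k, 'h, 's::finite) dimod). hom_long_dimod H X \<longrightarrow>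
          ld_mor H (tensor_dimod H i j (unit_dimod H) X) X (lmap j (dal X))
        \<and> bij (lmap j (dal X))
        \<and> ld_mor H X (tensor_dimod H i j (unit_dimod H) X) (inv (lmap j (dal X)))
        \<and> ld_mor H (tensor_dimod H i j X (unit_dimod H)) X (rmap i (dal X))
        \<and> bij (rmap i (dal X))
        \<and> ld_mor H X (tensor_dimod H i j X (unit_dimod H)) (inv (rmap i (dal X))))
    \<comment> \<open>naturality of the associativity constraint\<close>
  \<and> (\<forall>(U::('k, 'h, 't1::finite) dimod) (U'::('k, 'h, 't2::finite) dimod)
       (V::('k, 'h, 't3::finite) dimod) (V'::('k, 'h, 't4::finite) dimod)
       (W::('k, 'h, 't5::finite) dimod) (W'::('k, 'h, 't6::finite) dimod) f g h.
        hom_long_dimod H U \<and> hom_long_dimod H U' \<and> hom_long_dimod H V \<and> hom_long_dimod H V'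
        \<and> hom_long_dimod H W \<and> hom_long_dimod H W'
        \<and> ld_mor H U U' f \<and> ld_mor H V V' g \<and> ld_mor H W W' h
        \<longrightarrow> amap i j (dal U') (dal W') \<circ> tmap (tmap f g) h = tmap f (tmap g h) \<circ> amap i j (dal U) (dal W))
    \<comment> \<open>naturality of the unit constraints\<close>
  \<and> (\<forall>(X::('k, 'h, 'x1::finite) dimod) (X'::('k, 'h, 'x2::finite) dimod) f.
        hom_long_dimod H X \<and> hom_long_dimod H X' \<and> ld_mor H X X' f
        \<longrightarrow> f \<circ> lmap j (dal X) = lmap j (dal X') \<circ> tmap id f
          \<and> f \<circ> rmap i (dal X) = rmap i (dal X') \<circ> tmap f id)
    \<comment> \<open>pentagon axiom\<close>
  \<and> (\<forall>(U::('k, 'h, 'e1::finite) dimod) (V::('k, 'h, 'e2::finite) dimod)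
       (W::('k, 'h, 'e3::finite) dimod) (X::('k, 'h, 'e4::finite) dimod).
        hom_long_dimod H U \<and> hom_long_dimod H V \<and> hom_long_dimod H W \<and> hom_long_dimod H X
        \<longrightarrow> tmap id (amap i j (dal V) (dal X)) \<circ> amap i j (dal U) (dal X) \<circ> tmap (amap i j (dal U) (dal W)) id
            = amap i j (dal U) (dal (tensor_dimod H i j W X))
              \<circ> (amap i j (dal (tensor_dimod H i j U V)) (dal X) :: ((('e1 \<times> 'e2) \<times> 'e3) \<times> 'e4 \<Rightarrow> 'k) \<Rightarrow> _))
    \<comment> \<open>triangle axiom\<close>
  \<and> (\<forall>(U::('k, 'h, 'g1::finite) dimod) (V::('k, 'h, 'g2::finite) dimod).
        hom_long_dimod H U \<and> hom_long_dimod H V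
        \<longrightarrow> tmap id (lmap j (dal V)) \<circ> amap i j (dal U) (dal V) = tmap (rmap i (dal U)) id)"
proof -
  interpret hom_bialg H by unfold_locales (rule assms)
  show ?thesis
    by (intro conjI allI impI; (elim conjE)?)
      (simp_all add: hom_long_dimod_tensor hom_long_dimod_unit ld_mor_tmap tmap_id tmap_compose ld_mor_lin
        ld_mor_assoc bij_assoc ld_mor_inv ld_mor_unitors bij_unitors assoc_natural unitors_natural
        pentagon triangle)
qed

end
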